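(* Let $K$ be an algebraically closed field and let $d,n$ be integers with $1<d<n$, $\gcd(n,d)=1$ and $\operatorname{char}(K)\nmid d$. Let $m_0:=d\cdot\lfloor (n+d)/d\rfloor$ (the unique integer strictly between $n$ and $n+d$ divisible by $d$) and $\ell_0:=\lfloor (n+d)/d\rfloor=m_0/d$. If $n-m_0+\ell_0<0$, then $m_0$ is not $(n,d)$-reachable over $K$.
   Context: For a polynomial $f(x)\in K[x]$ of degree $n$ without repeated roots, $\mathcal{C}_{f,d}$ denotes the smooth projective model of the affine curve $y^d=f(x)$; it has a unique point at infinity $O$. $\mathcal{C}_{f,d}$ is identified with its image in its Jacobian $J(\mathcal{C}_{f,d})$ via $Q\mapsto \operatorname{cl}((Q)-(O))$ (linear equivalence class), and a point $Q\in\mathcal{C}_{f,d}(K)$ has order $m$ if $\operatorname{cl}((Q)-(O))$ has order $m$ in $J(\mathcal{C}_{f,d})(K)$. An integer $m>1$ is called $(n,d)$-reachable over $K$ if there exists a monic polynomial $f(x)\in K[x]$ of degree $n$ without repeated roots such that $\mathcal{C}_{f,d}(K)$ contains a point of order $m$. *)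

theory Defs
  imports "HOL-Computational_Algebra.Polynomial"
begin

(* Elements of the affine coordinate ring A = K[x,y]/(y^d - f) are represented by
   bivariate polynomials g :: 'a poly poly (a polynomial in y whose coefficients are
   polynomials in x).  Two representatives are equal in A iff (y^d - f) divides
   their difference. *)

definition curve_eq :: "'a::field poly \<Rightarrow> nat \<Rightarrow> 'a poly poly" where
  "curve_eq f d = monom 1 d - [:f:]"

definition eval2 :: "'a::field poly poly \<Rightarrow> 'a \<Rightarrow> 'a \<Rightarrow> 'a" where
  "eval2 g a b = poly (map_poly (\<lambda>c. poly c a) g) b"

definition affine_pt :: "'a::field poly \<Rightarrow> nat \<Rightarrow> 'a \<times> 'a \<Rightarrow> bool" where
  "affine_pt f d P \<longleftrightarrow> snd P ^ d = poly f (fst P)"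

(* g \<in> m_P^k A_{m_P}, where m_P = (x - a, y - b) is the maximal ideal of the affine point
   P = (a,b): there is v with v(P) \<noteq> 0 such that g*v lies in m_P^k, the ideal of A
   generated by the (x-a)^i (y-b)^(k-i). *)
definition vanish_ge :: "'a::field poly \<Rightarrow> nat \<Rightarrow> 'a \<times> 'a \<Rightarrow> 'a poly poly \<Rightarrow> nat \<Rightarrow> bool" where
  "vanish_ge f d P g k \<longleftrightarrow>
     (\<exists>v c. eval2 v (fst P) (snd P) \<noteq> 0 \<and>
        curve_eq f d dvd
          (g * v - (\<Sum>i\<le>k. c i * [:[:- fst P, 1:]:] ^ i * [:[:- snd P:], 1:] ^ (k - i))))"

definition ord_aff :: "'a::field poly \<Rightarrow> nat \<Rightarrow> 'a \<times> 'a \<Rightarrow> 'a poly poly \<Rightarrow> nat" where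
  "ord_aff f d P g = (GREATEST k. vanish_ge f d P g k)"

(* pole order at the point at infinity O of a reduced representative g (deg_y g < d),
   g = sum a_ij x^i y^j: ord_O(x) = -d, ord_O(y) = -n (n = deg f) *)
definition pole_O :: "'a::field poly \<Rightarrow> nat \<Rightarrow> 'a poly poly \<Rightarrow> nat" where
  "pole_O f d g = Max {d * degree (coeff g j) + degree f * j | j. coeff g j \<noteq> 0}"

(* points of C_{f,d}(K): None = O, Some (a,b) = affine point *)
definition curve_point :: "'a::field poly \<Rightarrow> nat \<Rightarrow> ('a \<times> 'a) option \<Rightarrow> bool" where
  "curve_point f d Q \<longleftrightarrow> (case Q of None \<Rightarrow> True | Some P \<Rightarrow> affine_pt f d P)"

(* k((Q) - (O)) is a principal divisor: there is a rational function g/h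
   (g, h nonzero reduced elements of A) with divisor k(Q) - k(O) *)
definition principal_mult :: "'a::field poly \<Rightarrow> nat \<Rightarrow> ('a \<times> 'a) option \<Rightarrow> nat \<Rightarrow> bool" where
  "principal_mult f d Q k \<longleftrightarrow>
     (\<exists>g h. g \<noteq> 0 \<and> h \<noteq> 0 \<and> degree g < d \<and> degree h < d \<and>
        (\<forall>P. affine_pt f d P \<longrightarrow>
           int (ord_aff f d P g) - int (ord_aff f d P h) = (if Q = Some P then int k else 0)) \<and>
        (- int (pole_O f d g)) - (- int (pole_O f d h)) = (if Q = None then 0 else - int k))"

(* the point Q has order m in J(C_{f,d}) *)
definition point_order :: "'a::field poly \<Rightarrow> nat \<Rightarrow> ('a \<times> 'a) option \<Rightarrow> nat \<Rightarrow> bool" where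
  "point_order f d Q m \<longleftrightarrow> 0 < m \<and> principal_mult f d Q m \<and>
      (\<forall>k. 0 < k \<and> k < m \<longrightarrow> \<not> principal_mult f d Q k)"

definition reachable :: "'a::field itself \<Rightarrow> nat \<Rightarrow> nat \<Rightarrow> nat \<Rightarrow> bool" where
  "reachable (TYPE('a)) n d m \<longleftrightarrow> 1 < m \<and>
     (\<exists>f :: 'a poly. lead_coeff f = 1 \<and> degree f = n \<and> rsquarefree f \<and>
        (\<exists>Q. curve_point f d Q \<and> point_order f d Q m))"

end

(* The point at infinity O has order 1, and a ramification point (a, 0) has order
   dividing d < m0, as x - a has divisor d (a, 0) - d O.  If an unramified point Q = (a, b) had
   order m0 = d l, then m0 (Q) - m0 (O) would be the divisor of a function F that is regular on
   the affine curve; since m0 < n + d, its pole order at most m0 at O forces F = p(x) + c y with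
   deg p <= l.  Vanishing to order d l at Q makes the norm c^d f(x) - (-p(x))^d, a polynomial of
   degree at most d l, equal to mu (x - a)^(d l).  This is impossible: mu = 0 gives d | n,
   deg p < l gives degree d l > n, and deg p = l gives degree at least (d - 1) l > n, because
   q^d + mu t^(d l) splits into d factors q - z t^l of which at most one has degree below l.
   Orders of vanishing at affine points are computed as subdegrees of power series expansions
   along explicit local parametrisations; pole orders at O come from the weights d and n of x
   and y. *)

theory Submission
  imports Defs "HOL-Computational_Algebra.Polynomial_FPS"
begin

unbundle fps_syntax

section \<open>Evaluation homomorphisms\<close>

locale comm_ring_hom =
  fixes h :: "'a::comm_ring_1 \<Rightarrow> 'b::comm_ring_1"
  assumes hom_add: "h (a + b) = h a + h b"
    and hom_mult: "h (a * b) = h a * h b"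
    and hom_one: "h 1 = 1"
begin

lemma hom_zero [simp]: "h 0 = 0"
  using hom_add[of 0 0] by simp

lemma hom_uminus: "h (- a) = - h a"
  using hom_add[of "- a" a] by (simp add: eq_neg_iff_add_eq_0)

lemma hom_diff: "h (a - b) = h a - h b"
  using hom_add[of a "- b"] by (simp add: hom_uminus)

lemma hom_power: "h (a ^ n) = h a ^ n"
  by (induction n) (simp_all add: hom_one hom_mult)

lemma hom_sum: "h (\<Sum>i\<in>A. g i) = (\<Sum>i\<in>A. h (g i))"
  by (induction A rule: infinite_finite_induct) (simp_all add: hom_add)

text \<open>Not \<open>[simp]\<close> here: for \<open>fps_const\<close> these would reverse the library's simp rules.\<close>

lemmas hom_simps = hom_add hom_mult hom_one hom_uminus hom_diff hom_power hom_sum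

lemma poly_map_poly_pCons: "poly (map_poly h (pCons c p)) y = h c + y * poly (map_poly h p) y"
  by (simp add: map_poly_pCons)

lemma comm_ring_hom_poly_map_poly: "comm_ring_hom (\<lambda>p. poly (map_poly h p) y)"
proof
  show add: "poly (map_poly h (p + q)) y = poly (map_poly h p) y + poly (map_poly h q) y" for p q
  proof (induction p arbitrary: q rule: pCons_induct)
    case (pCons a p)
    then show ?case
      by (cases q) (simp add: poly_map_poly_pCons hom_simps algebra_simps)
  qed simp
  show "poly (map_poly h (p * q)) y = poly (map_poly h p) y * poly (map_poly h q) y" for p q
  proof (induction p rule: pCons_induct)
    case (pCons a p)
    have "poly (map_poly h (smult a q)) y = h a * poly (map_poly h q) y"
      by (induction q rule: pCons_induct) (simp_all add: poly_map_poly_pCons hom_simps algebra_simps)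
    then show ?case
      using pCons.IH by (simp add: add poly_map_poly_pCons algebra_simps)
  qed simp
  show "poly (map_poly h 1) y = 1"
    by (simp add: hom_one)
qed

end

lemma fps_nth_0_poly_map_poly:
  assumes "h 0 = 0"
  shows "poly (map_poly h p) Y $ 0 = poly (map_poly (\<lambda>c. h c $ 0) p) (Y $ 0)"
  by (induction p rule: pCons_induct) (simp_all add: map_poly_pCons assms)

interpretation fps_const: comm_ring_hom fps_const
  by unfold_locales simp_all

interpretation poly_at: comm_ring_hom "\<lambda>p. poly p a" for a
  by unfold_locales simp_all

interpretation eval2: comm_ring_hom "\<lambda>g. eval2 g a b" for a b
  unfolding eval2_def by (rule poly_at.comm_ring_hom_poly_map_poly)

declare eval2.hom_simps [simp]

lemma eval2_pCons: "eval2 (pCons c g) a b = poly c a + b * eval2 g a b"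
  unfolding eval2_def by (rule poly_at.poly_map_poly_pCons)

lemma eval2_const [simp]: "eval2 [:c:] a b = poly c a"
  using eval2_pCons[of c 0 a b] by simp

lemma eval2_eq_poly_poly: "eval2 g a b = poly (poly g [:b:]) a"
  by (induction g rule: pCons_induct) (simp_all add: eval2_pCons)

definition poly_fps :: "'a::comm_ring_1 fps \<Rightarrow> 'a poly \<Rightarrow> 'a fps" where
  "poly_fps X p = poly (map_poly fps_const p) X"

interpretation poly_fps: comm_ring_hom "poly_fps X" for X
  unfolding poly_fps_def by (rule fps_const.comm_ring_hom_poly_map_poly)

declare poly_fps.hom_simps [simp]

lemma poly_fps_pCons: "poly_fps X (pCons c p) = fps_const c + X * poly_fps X p"
  unfolding poly_fps_def by (rule fps_const.poly_map_poly_pCons)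

lemma poly_fps_const [simp]: "poly_fps X [:c:] = fps_const c"
  by (simp add: poly_fps_pCons)

lemma poly_fps_nth_0: "poly_fps X p $ 0 = poly p (X $ 0)"
  unfolding poly_fps_def by (subst fps_nth_0_poly_map_poly) simp_all

lemma poly_fps_fps_X: "poly_fps fps_X p = fps_of_poly p"
  by (induction p rule: pCons_induct) (simp_all add: poly_fps_pCons fps_of_poly_pCons)

lemma poly_fps_shift: "poly_fps (fps_const a + fps_X) p = fps_of_poly (pcompose p [:a, 1:])"
  by (induction p rule: pCons_induct)
     (simp_all add: poly_fps_pCons pcompose_pCons fps_of_poly_add fps_of_poly_mult fps_of_poly_const)

lemma poly_fps_compose:
  fixes W :: "'a::idom fps"
  assumes "W $ 0 = 0"
  shows "poly_fps V p oo W = poly_fps (V oo W) p"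
  by (induction p rule: pCons_induct)
     (simp_all add: poly_fps_pCons fps_compose_add_distrib fps_compose_mult_distrib[OF assms])

definition eval2_fps :: "'a::comm_ring_1 fps \<Rightarrow> 'a fps \<Rightarrow> 'a poly poly \<Rightarrow> 'a fps" where
  "eval2_fps X Y G = poly (map_poly (poly_fps X) G) Y"

interpretation eval2_fps: comm_ring_hom "eval2_fps X Y" for X Y
  unfolding eval2_fps_def by (rule poly_fps.comm_ring_hom_poly_map_poly)

declare eval2_fps.hom_simps [simp]

lemma eval2_fps_pCons: "eval2_fps X Y (pCons c G) = poly_fps X c + Y * eval2_fps X Y G"
  unfolding eval2_fps_def by (rule poly_fps.poly_map_poly_pCons)

lemma eval2_fps_const [simp]: "eval2_fps X Y [:c:] = poly_fps X c"
  by (simp add: eval2_fps_pCons)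

lemma eval2_fps_y [simp]: "eval2_fps X Y [:0, 1:] = Y"
  by (simp add: eval2_fps_pCons)

lemma eval2_fps_nth_0: "eval2_fps X Y G $ 0 = eval2 G (X $ 0) (Y $ 0)"
  unfolding eval2_fps_def eval2_def by (subst fps_nth_0_poly_map_poly) (simp_all add: poly_fps_nth_0)

lemma eval2_fps_curve_eq:
  assumes "Y ^ d = poly_fps X f"
  shows "eval2_fps X Y (curve_eq f d) = 0"
  using assms by (simp add: curve_eq_def monom_altdef eval2_fps_pCons)

lemma eval2_fps_eq_0_if_curve_eq_dvd:
  assumes "Y ^ d = poly_fps X f" "curve_eq f d dvd G"
  shows "eval2_fps X Y G = 0"
  using assms eval2_fps_curve_eq[OF assms(1)] by (auto elim!: dvdE)

section \<open>Formal power series\<close>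

lemma fps_X_power_dvd_iff:
  fixes F :: "'a::field fps"
  shows "fps_X ^ k dvd F \<longleftrightarrow> (\<forall>j<k. F $ j = 0)"
proof (cases "F = 0")
  case False
  then have "fps_X ^ k dvd F \<longleftrightarrow> k \<le> subdegree F"
    by (simp add: fps_dvd_iff fps_X_power_subdegree)
  also have "\<dots> \<longleftrightarrow> (\<forall>j<k. F $ j = 0)"
    using False by (auto intro: subdegree_geI nth_less_subdegree_zero)
  finally show ?thesis .
qed simp

lemma fps_X_dvd_iff: "fps_X dvd (F :: 'a::field fps) \<longleftrightarrow> F $ 0 = 0"
  using fps_X_power_dvd_iff[of 1 F] by simp

lemma fps_of_poly_eq_0_if_fps_X_power_dvd:
  fixes p :: "'a::field poly"
  assumes "degree p < k" "fps_X ^ k dvd fps_of_poly p"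
  shows "p = 0"
proof (rule poly_eqI)
  show "coeff p j = coeff 0 j" for j
    using assms by (cases "j < k") (simp_all add: fps_X_power_dvd_iff coeff_eq_0)
qed

lemma fps_power_nth_1:
  fixes F :: "'a::comm_ring_1 fps"
  shows "(F ^ n) $ 1 = of_nat n * (F $ 0) ^ (n - 1) * F $ 1"
proof -
  have "(F ^ n) $ 1 = fps_deriv (F ^ n) $ 0"
    by simp
  also have "\<dots> = of_nat n * F $ 1 * (F $ 0) ^ (n - 1)"
    by (simp add: fps_deriv_power fps_mult_nth_0 fps_power_zeroth del: fps_deriv_nth)
       (simp add: fps_deriv_nth)
  finally show ?thesis
    by (simp add: algebra_simps)
qed

lemma fps_inv_nth_0 [simp]: "fps_inv E $ 0 = 0"
  by (simp add: fps_inv_def)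

lemma fps_inv_nth_1 [simp]: "fps_inv (E :: 'a::field fps) $ Suc 0 = 1 / E $ Suc 0"
  by (simp add: fps_inv_def)

text \<open>The \<open>d\<close>-th root through \<open>b\<close> is obtained by inverting the series \<open>(b + t)\<^sup>d - b\<^sup>d\<close>, whose linear
  coefficient \<open>d b\<^sup>d\<^sup>-\<^sup>1\<close> must be nonzero.\<close>

definition fps_root :: "nat \<Rightarrow> 'a::field \<Rightarrow> 'a fps \<Rightarrow> 'a fps" where
  "fps_root d b D =
     fps_const b + (fps_inv ((fps_const b + fps_X) ^ d - fps_const (b ^ d)) oo (D - fps_const (b ^ d)))"

lemma fps_root_nth_0 [simp]: "fps_root d b D $ 0 = b"
  by (simp add: fps_root_def)

lemma fps_root_power:
  fixes D :: "'a::field fps"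
  assumes "b \<noteq> 0" "of_nat d \<noteq> (0::'a)" "D $ 0 = b ^ d"
  shows "fps_root d b D ^ d = D"
proof -
  define E where "E = (fps_const b + fps_X) ^ d - fps_const (b ^ d)"
  define W where "W = fps_inv E oo (D - fps_const (b ^ d))"
  have E0: "E $ 0 = 0"
    by (simp add: E_def fps_power_zeroth)
  have E1: "E $ 1 \<noteq> 0"
    using fps_power_nth_1[of "fps_const b + fps_X" d] assms(1,2) by (simp add: E_def)
  have W0: "W $ 0 = 0"
    by (simp add: W_def)
  have "E oo W = (fps_const b + W) ^ d - fps_const (b ^ d)"
    by (simp add: E_def fps_compose_sub_distrib fps_compose_add_distrib
        fps_X_fps_compose_startby0[OF W0] flip: fps_compose_power[OF W0])
  moreover have "E oo W = D - fps_const (b ^ d)"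
    using assms(3) by (simp add: W_def fps_compose_assoc fps_inv_right[OF E0 E1])
  ultimately have "(fps_const b + W) ^ d = D"
    by simp
  moreover have "fps_root d b D = fps_const b + W"
    by (simp only: fps_root_def E_def W_def)
  ultimately show ?thesis
    by simp
qed

lemma fps_inv_compose_X_power:
  fixes E :: "'a::field fps"
  assumes E0: "E $ 0 = 0" and E1: "E $ 1 \<noteq> 0" and "0 < d"
  shows "E oo (fps_inv E oo fps_X ^ d) = fps_X ^ d"
    and "subdegree (fps_inv E oo fps_X ^ d) = d"
    and "fps_inv E oo fps_X ^ d \<noteq> 0"
proof -
  have X0: "(fps_X ^ d :: 'a fps) $ 0 = 0"
    using \<open>0 < d\<close> by simp
  have inv0: "fps_inv E $ 0 = 0"
    by simp
  show "E oo (fps_inv E oo fps_X ^ d) = fps_X ^ d"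
    by (simp add: fps_compose_assoc[OF X0 inv0] fps_inv_right[OF E0 E1] fps_X_fps_compose_startby0[OF X0])
  have "fps_X dvd fps_inv E"
    by (simp add: fps_X_dvd_iff)
  then obtain T where T: "fps_inv E = fps_X * T"
    by (elim dvdE)
  have "T $ 0 = fps_inv E $ 1"
    by (simp add: T)
  then have T0: "(T oo fps_X ^ d) $ 0 \<noteq> 0"
    using E1 by simp
  have s: "fps_inv E oo fps_X ^ d = fps_X ^ d * (T oo fps_X ^ d)"
    by (simp add: T fps_compose_mult_distrib[OF X0] fps_X_fps_compose_startby0[OF X0])
  have "T oo fps_X ^ d \<noteq> 0"
    using T0 by (metis fps_zero_nth)
  then show "subdegree (fps_inv E oo fps_X ^ d) = d" "fps_inv E oo fps_X ^ d \<noteq> 0"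
    using T0 by (simp_all add: s fps_X_power_subdegree)
qed

section \<open>Polynomials\<close>

lemma rsquarefree_root_factor:
  fixes f :: "'a::field poly"
  assumes "rsquarefree f" "poly f a = 0"
  obtains u where "f = [:-a, 1:] * u" "poly u a \<noteq> 0"
proof -
  have f0: "f \<noteq> 0"
    using assms(1) by (simp add: rsquarefree_def)
  obtain u where u: "f = [:-a, 1:] * u"
    using assms(2) by (auto simp: poly_eq_0_iff_dvd elim: dvdE)
  have "poly u a \<noteq> 0"
  proof
    assume "poly u a = 0"
    then obtain v where "u = [:-a, 1:] * v"
      by (auto simp: poly_eq_0_iff_dvd elim: dvdE)
    then have "f = [:-a, 1:] ^ 2 * v"
      using u by (simp only: power2_eq_square mult.assoc)
    then have "[:-a, 1:] ^ 2 dvd f"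
      by simp
    then have "2 \<le> order a f"
      using f0 by (simp add: order_divides)
    then show False
      using rsquarefree_root_order[OF assms f0] by simp
  qed
  with u show thesis
    using that by blast
qed

lemma degree_linear_mult: "p \<noteq> 0 \<Longrightarrow> degree ([:-a, 1:] * p) = Suc (degree p)"
  for p :: "'a::idom poly"
  by (subst degree_mult_eq) auto

lemma degree_power_eq_mult: "degree (q ^ n) = n * degree q"
  for q :: "'a::idom poly"
  by (cases "q = 0") (simp_all add: degree_power_eq power_0_left)

lemma coeff_mult_ge_degree_sum:
  fixes p q :: "'a::idom poly"
  assumes "degree p + degree q \<le> e"
  shows "coeff (p * q) e = (if e = degree p + degree q then lead_coeff p * lead_coeff q else 0)"
  using assms degree_mult_le[of p q] by (auto simp: coeff_mult_degree_sum coeff_eq_0)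

lemma alg_closed_separable_eq_prod_roots:
  fixes P :: "'a::alg_closed_field poly"
  assumes monic: "lead_coeff P = 1" and separable: "\<And>z. poly P z = 0 \<Longrightarrow> poly (pderiv P) z \<noteq> 0"
  shows "(\<Prod>z\<in>{z. poly P z = 0}. [:-z, 1:]) = P" and "card {z. poly P z = 0} = degree P"
proof -
  have "P \<noteq> 0"
    using monic by auto
  then obtain A where A: "size A = degree P" "P = (\<Prod>x\<in>#A. [:-x, 1:])"
    using alg_closed_imp_factorization[of P] monic by auto
  have roots: "set_mset A = {z. poly P z = 0}"
    by (auto simp: A(2) poly_prod_mset)
  have count: "count A x = 1" if "x \<in># A" for x
  proof (rule ccontr)
    assume "count A x \<noteq> 1"
    moreover have "0 < count A x"
      using that by simp
    ultimately have "1 < count A x"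
      by linarith
    then have "x \<in># A - {#x#}"
      unfolding in_diff_count by simp
    from multi_member_split[OF this] obtain B where "A - {#x#} = add_mset x B"
      by blast
    then have "A = add_mset x (add_mset x B)"
      using insert_DiffM[OF that] by simp
    then have P: "P = [:-x, 1:] * ([:-x, 1:] * (\<Prod>x\<in>#B. [:-x, 1:]))"
      by (simp only: A(2) prod_mset.add_mset image_mset_add_mset)
    have double_root: "poly (pderiv (l * (l * R))) x = 0" if "poly l x = 0" for l R :: "'a poly"
      using that by (simp add: pderiv_mult)
    have "poly (pderiv P) x = 0"
      unfolding P by (rule double_root) simp
    then show False
      using separable that roots by auto
  qed
  have "P = (\<Prod>x\<in>set_mset A. [:-x, 1:] ^ count A x)"
    unfolding A(2) by (rule image_prod_mset_multiplicity)
  then show "(\<Prod>z\<in>{z. poly P z = 0}. [:-z, 1:]) = P"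
    using count by (simp add: roots)
  have "size A = (\<Sum>x\<in>set_mset A. count A x)"
    by (rule size_multiset_overloaded_eq)
  then show "card {z. poly P z = 0} = degree P"
    using count A(1) by (simp add: roots)
qed

lemma
  fixes c :: "'a::alg_closed_field"
  assumes "c \<noteq> 0" "of_nat d \<noteq> (0::'a)"
  shows prod_roots_x_power_minus_const: "(\<Prod>z\<in>{z. z ^ d = c}. [:-z, 1:]) = monom 1 d - [:c:]"
    and card_roots_x_power_eq_const: "card {z. z ^ d = c} = d"
proof -
  define P where "P = monom 1 d - [:c:]"
  have "0 < d"
    using assms(2) by (rule contrapos_np) simp
  then have "coeff P d = 1" "degree P \<le> d"
    unfolding P_def by (cases d, simp_all, intro degree_diff_le) (simp_all add: degree_monom_le)
  then have deg: "degree P = d"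
    by (simp add: antisym le_degree)
  with \<open>coeff P d = 1\<close> have monic: "lead_coeff P = 1"
    by simp
  have separable: "poly (pderiv P) z \<noteq> 0" if "poly P z = 0" for z
  proof -
    have "z \<noteq> 0"
      using that assms(1) \<open>0 < d\<close> by (auto simp: P_def poly_monom power_0_left)
    then show ?thesis
      using assms(2) by (simp add: P_def pderiv_diff pderiv_monom poly_monom)
  qed
  have roots: "{z. poly P z = 0} = {z. z ^ d = c}"
    by (simp add: P_def poly_monom)
  have "(\<Prod>z\<in>{z. poly P z = 0}. [:-z, 1:]) = P" "card {z. poly P z = 0} = degree P"
    using alg_closed_separable_eq_prod_roots[OF monic separable] by blast+
  then show "(\<Prod>z\<in>{z. z ^ d = c}. [:-z, 1:]) = monom 1 d - [:c:]"
    and "card {z. z ^ d = c} = d"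
    unfolding P_def[symmetric] by (simp_all only: roots deg)
qed

lemma alg_closed_infinite: "infinite (UNIV :: 'a::alg_closed_field set)"
proof
  assume fin: "finite (UNIV :: 'a set)"
  define Q :: "'a poly" where "Q = (\<Prod>x\<in>UNIV. [:-x, 1:])"
  have "degree Q = card (UNIV :: 'a set)"
    unfolding Q_def by (subst degree_prod_sum_eq) simp_all
  then have "degree (1 + Q) > 0"
    using fin by (subst degree_add_eq_right) (simp_all add: card_gt_0_iff)
  then obtain z where "poly (1 + Q) z = 0"
    using alg_closed_imp_poly_has_root by blast
  moreover have "poly Q z = 0"
    unfolding Q_def poly_prod using fin by (intro prod_zero) auto
  ultimately show False
    by simp
qed

lemma poly_eqI_nonzero_points:
  fixes p q :: "'a::alg_closed_field poly"
  assumes "\<And>t. t \<noteq> 0 \<Longrightarrow> poly p t = poly q t"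
  shows "p = q"
proof (rule ccontr)
  assume "p \<noteq> q"
  then have "finite {t. poly (p - q) t = 0}"
    by (intro poly_roots_finite) simp
  moreover have "UNIV - {0} \<subseteq> {t. poly (p - q) t = 0}"
    using assms by auto
  ultimately show False
    using alg_closed_infinite finite_subset by fastforce
qed

text \<open>Homogenising \<open>\<Prod>z\<in>S. (X - z) = X\<^sup>d + \<mu>\<close>: the identity is checked at every \<open>t \<noteq> 0\<close> after
  dividing by \<open>t\<^sup>l\<^sup>d\<close>.\<close>

lemma power_plus_monom_eq_prod:
  fixes q :: "'a::alg_closed_field poly"
  assumes "card S = d" "(\<Prod>z\<in>S. [:-z, 1:]) = monom 1 d + [:\<mu>:]"
  shows "q ^ d + monom \<mu> (d * l) = (\<Prod>z\<in>S. q - monom z l)"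
proof (rule poly_eqI_nonzero_points)
  fix t :: 'a
  assume "t \<noteq> 0"
  define u where "u = poly q t / t ^ l"
  have q: "poly q t = t ^ l * u"
    using \<open>t \<noteq> 0\<close> by (simp add: u_def)
  have "poly (\<Prod>z\<in>S. q - monom z l) t = (\<Prod>z\<in>S. t ^ l * (u - z))"
    by (simp add: poly_prod poly_monom q algebra_simps)
  also have "\<dots> = (t ^ l) ^ d * poly (\<Prod>z\<in>S. [:-z, 1:]) u"
    by (simp add: prod.distrib poly_prod assms(1))
  also have "\<dots> = (t ^ l * u) ^ d + \<mu> * t ^ (d * l)"
    by (simp add: assms(2) poly_monom algebra_simps power_mult_distrib flip: power_mult)
  finally show "poly (q ^ d + monom \<mu> (d * l)) t = poly (\<Prod>z\<in>S. q - monom z l) t"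
    by (simp add: q poly_monom)
qed

lemma degree_power_plus_monom_ge:
  fixes q :: "'a::alg_closed_field poly"
  assumes "of_nat d \<noteq> (0::'a)" "\<mu> \<noteq> 0" "degree q = l" "q ^ d + monom \<mu> (d * l) \<noteq> 0"
  shows "(d - 1) * l \<le> degree (q ^ d + monom \<mu> (d * l))"
proof -
  define S where "S = {z. z ^ d = - \<mu>}"
  have card: "card S = d"
    using card_roots_x_power_eq_const[of "- \<mu>" d] assms(1,2) by (simp add: S_def)
  then have "finite S"
    using assms(1) by (metis card_ge_0_finite gr0I of_nat_0)
  have prod: "q ^ d + monom \<mu> (d * l) = (\<Prod>z\<in>S. q - monom z l)"
    using prod_roots_x_power_minus_const[of "- \<mu>" d] assms(1,2) card
    by (intro power_plus_monom_eq_prod) (simp_all add: S_def)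
  then have nonzero: "q - monom z l \<noteq> 0" if "z \<in> S" for z
    using assms(4) \<open>finite S\<close> that by auto
  have "(card S - 1) * l \<le> card (S - {lead_coeff q}) * l"
    by (cases "lead_coeff q \<in> S") (simp_all add: card_Diff_singleton \<open>finite S\<close>)
  also have "\<dots> \<le> (\<Sum>z\<in>S - {lead_coeff q}. degree (q - monom z l))"
  proof -
    have "l \<le> degree (q - monom z l)" if "z \<in> S - {lead_coeff q}" for z
      using that assms(3) by (intro le_degree) (auto simp: coeff_monom)
    then show ?thesis
      using sum_bounded_below[of "S - {lead_coeff q}" l] by simp
  qed
  also have "\<dots> \<le> (\<Sum>z\<in>S. degree (q - monom z l))"
    using \<open>finite S\<close> by (intro sum_mono2) auto
  also have "\<dots> = degree (q ^ d + monom \<mu> (d * l))"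
    unfolding prod using nonzero by (intro degree_prod_sum_eq[symmetric]) auto
  finally show ?thesis
    by (simp add: card)
qed

lemma not_eq_power_plus_monom:
  fixes F q :: "'a::alg_closed_field poly"
  assumes "of_nat d \<noteq> (0::'a)" "F \<noteq> 0" "degree F < (d - 1) * l" "\<not> d dvd degree F" "degree q \<le> l"
  shows "F \<noteq> q ^ d + monom \<mu> (d * l)"
proof
  assume F: "F = q ^ d + monom \<mu> (d * l)"
  have "0 < d"
    using assms(1) by (rule contrapos_np) simp
  consider "\<mu> = 0" | "\<mu> \<noteq> 0" "degree q < l" | "\<mu> \<noteq> 0" "degree q = l"
    using assms(5) by linarith
  then show False
  proof cases
    case 1
    then show False
      using F assms(4) by (simp add: degree_power_eq_mult)
  next
    case 2
    then have "degree (q ^ d) < degree (monom \<mu> (d * l))"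
      using \<open>0 < d\<close> by (simp add: degree_power_eq_mult degree_monom_eq)
    then have "degree F = d * l"
      using 2 by (simp add: F degree_add_eq_right degree_monom_eq)
    then show False
      using assms(3) by (simp add: diff_mult_distrib)
  next
    case 3
    then show False
      using degree_power_plus_monom_ge[OF assms(1)] F assms(2,3) by fastforce
  qed
qed

section \<open>Bivariate polynomials modulo the curve equation\<close>

lemma coeff_curve_eq_self: "0 < d \<Longrightarrow> coeff (curve_eq f d) d = 1"
  by (cases d) (simp_all add: curve_eq_def)

lemma degree_curve_eq:
  assumes "0 < d"
  shows "degree (curve_eq f d) = d"
proof (rule antisym)
  show "degree (curve_eq f d) \<le> d"
    unfolding curve_eq_def using assms by (intro degree_diff_le) (simp_all add: degree_monom_le)
  show "d \<le> degree (curve_eq f d)"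
    using coeff_curve_eq_self[OF assms, of f] by (intro le_degree) simp
qed

lemma curve_eq_nonzero: "0 < d \<Longrightarrow> curve_eq f d \<noteq> 0"
  using coeff_curve_eq_self[of d f] by auto

lemma reduced_eq_0_if_curve_eq_dvd:
  assumes "degree G < d" "curve_eq f d dvd G"
  shows "G = 0"
proof (rule ccontr)
  assume G: "G \<noteq> 0"
  obtain q where q: "G = curve_eq f d * q"
    using assms(2) by (elim dvdE)
  with G have "q \<noteq> 0" "0 < d"
    using assms(1) by auto
  then have "degree G = d + degree q"
    using q by (simp add: degree_mult_eq curve_eq_nonzero degree_curve_eq)
  then show False
    using assms(1) by simp
qed

definition curve_reduce :: "'a::field poly \<Rightarrow> nat \<Rightarrow> 'a poly poly \<Rightarrow> 'a poly poly" where
  "curve_reduce f d G = snd (pseudo_divmod G (curve_eq f d))"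

lemma
  assumes "0 < d"
  shows curve_eq_dvd_diff_reduce: "curve_eq f d dvd G - curve_reduce f d G"
    and degree_curve_reduce: "degree (curve_reduce f d G) < d"
proof -
  obtain q r where qr: "pseudo_divmod G (curve_eq f d) = (q, r)"
    by fastforce
  have "G - r = curve_eq f d * q"
    using pseudo_divmod(1)[OF curve_eq_nonzero[OF assms] qr]
    by (simp add: degree_curve_eq coeff_curve_eq_self assms)
  then show "curve_eq f d dvd G - curve_reduce f d G"
    by (simp add: curve_reduce_def qr)
  show "degree (curve_reduce f d G) < d"
    using pseudo_divmod(2)[OF curve_eq_nonzero[OF assms] qr] assms
    by (auto simp: curve_reduce_def qr degree_curve_eq)
qed

lemma eval2_eq_0_decompose:
  fixes G :: "'a::field poly poly"
  assumes "eval2 G a b = 0"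
  obtains S S' where "G = [:[:-b:], 1:] * S + [:[:-a, 1:]:] * [:S':]"
proof
  define S where "S = synthetic_div G [:b:]"
  define S' where "S' = synthetic_div (poly G [:b:]) a"
  have "poly G [:b:] = [:-a, 1:] * S' + [:eval2 G a b:]"
    using synthetic_div_correct'[of a "poly G [:b:]"] by (simp add: S'_def eval2_eq_poly_poly)
  moreover have "G = [:[:-b:], 1:] * S + [:poly G [:b:]:]"
    using synthetic_div_correct'[of "[:b:]" G] by (simp add: S_def)
  ultimately show "G = [:[:-b:], 1:] * S + [:[:-a, 1:]:] * [:S':]"
    using assms by (simp add: mult.commute)
qed

lemma decompose_x_minus:
  fixes G :: "'a::field poly poly"
  shows "G = smult [:-a, 1:] (map_poly (\<lambda>c. synthetic_div c a) G) + map_poly (\<lambda>c. [:poly c a:]) G"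
proof (rule poly_eqI)
  fix n
  show "coeff G n =
    coeff (smult [:-a, 1:] (map_poly (\<lambda>c. synthetic_div c a) G) + map_poly (\<lambda>c. [:poly c a:]) G) n"
    using synthetic_div_correct'[of a "coeff G n"] by (simp add: coeff_map_poly)
qed

lemma eq_smult_x_minus_if_vanishes:
  fixes G :: "'a::field poly poly"
  assumes "map_poly (\<lambda>c. poly c a) G = 0"
  shows "G = smult [:-a, 1:] (map_poly (\<lambda>c. synthetic_div c a) G)"
proof -
  have "poly (coeff G n) a = 0" for n
    using arg_cong[OF assms, of "\<lambda>p. coeff p n"] by (simp add: coeff_map_poly)
  then have "map_poly (\<lambda>c. [:poly c a:]) G = 0"
    by (intro poly_eqI) (simp add: coeff_map_poly)
  then show ?thesis
    using decompose_x_minus[of G a] by simp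
qed

lemma vanishes_at_if_eval2_roots:
  fixes G :: "'a::field poly poly"
  assumes "degree G < card S" "\<And>\<beta>. \<beta> \<in> S \<Longrightarrow> eval2 G \<alpha> \<beta> = 0"
  shows "map_poly (\<lambda>c. poly c \<alpha>) G = 0"
proof (rule ccontr)
  define Gb where "Gb = map_poly (\<lambda>c. poly c \<alpha>) G"
  assume "map_poly (\<lambda>c. poly c \<alpha>) G \<noteq> 0"
  then have "Gb \<noteq> 0"
    by (simp add: Gb_def)
  have "card S \<le> card {\<beta>. poly Gb \<beta> = 0}"
    using assms(2) by (intro card_mono poly_roots_finite \<open>Gb \<noteq> 0\<close>) (auto simp: Gb_def eval2_def)
  also have "\<dots> \<le> degree Gb"
    by (rule card_poly_roots_bound[OF \<open>Gb \<noteq> 0\<close>])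
  also have "\<dots> \<le> degree G"
    unfolding Gb_def by (rule map_poly_degree_leq)
  finally show False
    using assms(1) by simp
qed

lemma poly_cutoff_plus_shift: "poly_cutoff d P + monom 1 d * poly_shift d P = P"
  for P :: "'a::comm_semiring_1 poly"
  by (rule poly_eqI) (simp add: coeff_poly_cutoff coeff_poly_shift coeff_monom_mult)

lemma eq_cutoff_shift_if_reduced:
  fixes P g :: "'a::field poly poly"
  assumes "degree P < 2 * d" "degree g < d" "curve_eq f d dvd g - P"
  shows "g = poly_cutoff d P + [:f:] * poly_shift d P"
proof -
  define g' where "g' = poly_cutoff d P + [:f:] * poly_shift d P"
  have "P - g' = curve_eq f d * poly_shift d P"
    using poly_cutoff_plus_shift[of d P] by (simp add: g'_def curve_eq_def algebra_simps)
  then have "curve_eq f d dvd (g - P) + (P - g')"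
    by (simp only:) (rule dvd_add[OF assms(3)], simp)
  then have "curve_eq f d dvd g - g'"
    by simp
  moreover have "coeff g' k = 0" if "d \<le> k" for k
    using that assms(1) by (simp add: g'_def coeff_poly_cutoff coeff_poly_shift coeff_eq_0)
  then have "degree g' \<le> d - 1"
    by (intro degree_le) auto
  then have "degree g' < d"
    using assms(2) by linarith
  then have "degree (g - g') < d"
    using assms(2) degree_diff_le_max[of g g'] by linarith
  ultimately show ?thesis
    using reduced_eq_0_if_curve_eq_dvd by (fastforce simp: g'_def)
qed

section \<open>Weighted degree\<close>

text \<open>With \<open>x\<close> and \<open>y\<close> having poles of orders \<open>d\<close> and \<open>n\<close> at infinity, \<open>weight d n G j\<close> is the pole
  order of the leading monomial \<open>x\<^sup>e y\<^sup>j\<close> of \<open>G\<close> in the \<open>j\<close>-th column.\<close>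

definition weight :: "nat \<Rightarrow> nat \<Rightarrow> 'a::zero poly poly \<Rightarrow> nat \<Rightarrow> nat" where
  "weight d n G j = d * degree (coeff G j) + n * j"

definition weight_max_unique :: "nat \<Rightarrow> nat \<Rightarrow> 'a::zero poly poly \<Rightarrow> nat \<Rightarrow> bool" where
  "weight_max_unique d n G j0 \<longleftrightarrow>
     coeff G j0 \<noteq> 0 \<and> (\<forall>j. coeff G j \<noteq> 0 \<longrightarrow> j \<noteq> j0 \<longrightarrow> weight d n G j < weight d n G j0)"

lemma coprime_lincomb_inj:
  fixes n d :: nat
  assumes "coprime n d" "j < d" "j' < d" "d * a + n * j = d * b + n * j'"
  shows "j = j'"
proof -
  have ordered: "j = j'" if "j \<le> j'" "j' < d" "d * a + n * j = d * b + n * j'" for j j' a b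
  proof -
    have "d * a = d * b + n * (j' - j)"
      using that by (simp add: diff_mult_distrib2)
    then have "d dvd n * (j' - j)"
      by (metis dvd_add_right_iff dvd_triv_left)
    then have "d dvd j' - j"
      using assms(1) by (simp add: coprime_dvd_mult_right_iff coprime_commute)
    then show "j = j'"
      using that(1,2) by (auto dest: dvd_imp_le)
  qed
  show ?thesis
    using ordered[of j j' a b] ordered[of j' j b a] assms(2-4) by (cases "j \<le> j'") auto
qed

lemma coeff_coeff_mult_eq_0_if_weight_less:
  fixes F h :: "'a::idom poly poly"
  assumes "0 < d" "weight d n F i + weight d n h j < d * e + n * (i + j)"
  shows "coeff (coeff F i * coeff h j) e = 0"
proof -
  have "d * (degree (coeff F i) + degree (coeff h j)) < d * e"
    using assms(2) by (simp add: weight_def algebra_simps)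
  then have "degree (coeff F i * coeff h j) < e"
    by (meson degree_mult_le le_less_trans mult_less_cancel1)
  then show ?thesis
    by (simp add: coeff_eq_0)
qed

lemma weight_add_less_if_not_top:
  assumes F: "weight_max_unique d n F j0" and h: "weight_max_unique d n h i0"
    and "coeff F i \<noteq> 0" "coeff h j \<noteq> 0" "(i, j) \<noteq> (j0, i0)"
  shows "weight d n F i + weight d n h j < weight d n F j0 + weight d n h i0"
proof -
  have "weight d n F i \<le> weight d n F j0" "weight d n h j \<le> weight d n h i0"
    using assms unfolding weight_max_unique_def by (metis order.refl less_imp_le)+
  moreover have "weight d n F i < weight d n F j0 \<or> weight d n h j < weight d n h i0"
    using assms unfolding weight_max_unique_def by blast
  ultimately show ?thesis
    by linarith
qed

text \<open>Only the product of the two top monomials reaches the weight of their product.\<close>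

lemma coeff_coeff_mult_weight_ge:
  fixes F h :: "'a::idom poly poly"
  assumes "0 < d" and F: "weight_max_unique d n F j0" and h: "weight_max_unique d n h i0"
    and ge: "weight d n F j0 + weight d n h i0 \<le> d * e + n * m"
  defines "e0 \<equiv> degree (coeff F j0) + degree (coeff h i0)"
  shows "coeff (coeff (F * h) m) e =
    (if m = j0 + i0 \<and> e = e0 then lead_coeff (coeff F j0) * lead_coeff (coeff h i0) else 0)"
proof -
  define c where "c = lead_coeff (coeff F j0) * lead_coeff (coeff h i0)"
  have summand: "coeff (coeff F i * coeff h (m - i)) e = (if i = j0 then (if m = j0 + i0 \<and> e = e0 then c else 0) else 0)"
    if "i \<le> m" for i
  proof (cases "i = j0 \<and> m - i = i0")
    case True
    then have "m = j0 + i0" "i = j0" "m - i = i0"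
      using that by auto
    moreover have "d * e0 \<le> d * e"
      using ge \<open>m = j0 + i0\<close> by (simp add: weight_def e0_def algebra_simps)
    then have "e0 \<le> e"
      using \<open>0 < d\<close> by simp
    ultimately show ?thesis
      using F h by (simp add: coeff_mult_ge_degree_sum weight_max_unique_def degree_mult_eq c_def e0_def)
  next
    case False
    have less: "weight d n F i + weight d n h (m - i) < d * e + n * (i + (m - i))"
      if "coeff F i \<noteq> 0" "coeff h (m - i) \<noteq> 0"
      using weight_add_less_if_not_top[OF F h that] False ge \<open>i \<le> m\<close> by simp
    have "coeff (coeff F i * coeff h (m - i)) e = 0"
      using coeff_coeff_mult_eq_0_if_weight_less[OF \<open>0 < d\<close> less]
      by (cases "coeff F i = 0 \<or> coeff h (m - i) = 0") auto
    then show ?thesis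
      using False that by auto
  qed
  have "coeff (coeff (F * h) m) e = (\<Sum>i\<le>m. coeff (coeff F i * coeff h (m - i)) e)"
    by (simp add: coeff_mult coeff_sum)
  also have "\<dots> = (\<Sum>i\<le>m. if i = j0 then (if m = j0 + i0 \<and> e = e0 then c else 0) else 0)"
    by (rule sum.cong) (simp_all add: summand)
  also have "\<dots> = (if m = j0 + i0 \<and> e = e0 then c else 0)"
    by (simp add: sum.delta)
  finally show ?thesis
    by (simp add: c_def)
qed

lemma weight_max_unique_mult:
  fixes F h :: "'a::idom poly poly"
  assumes "0 < d" and F: "weight_max_unique d n F j0" and h: "weight_max_unique d n h i0"
  shows "weight_max_unique d n (F * h) (j0 + i0)"
    and "weight d n (F * h) (j0 + i0) = weight d n F j0 + weight d n h i0"
proof -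
  define W where "W = weight d n F j0 + weight d n h i0"
  define e0 where "e0 = degree (coeff F j0) + degree (coeff h i0)"
  note coeff_top = coeff_coeff_mult_weight_ge[OF assms, folded W_def e0_def]
  have W: "W = d * e0 + n * (j0 + i0)"
    by (simp add: W_def e0_def weight_def algebra_simps)
  have "coeff (coeff (F * h) (j0 + i0)) e0 \<noteq> 0"
    using F h coeff_top[of e0 "j0 + i0"] W by (simp add: weight_max_unique_def)
  moreover have "coeff (coeff (F * h) (j0 + i0)) e = 0" if "e0 < e" for e
    using coeff_top[of e "j0 + i0"] W that by simp
  ultimately have deg: "degree (coeff (F * h) (j0 + i0)) = e0"
    by (intro antisym degree_le le_degree) auto
  then show "weight d n (F * h) (j0 + i0) = weight d n F j0 + weight d n h i0"
    by (simp add: weight_def e0_def algebra_simps)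
  have "weight d n (F * h) m < W" if "coeff (F * h) m \<noteq> 0" "m \<noteq> j0 + i0" for m
  proof (rule ccontr)
    assume "\<not> weight d n (F * h) m < W"
    then have "coeff (coeff (F * h) m) (degree (coeff (F * h) m)) = 0"
      using coeff_top that(2) by (simp add: weight_def)
    then show False
      using that(1) by simp
  qed
  moreover have "coeff (F * h) (j0 + i0) \<noteq> 0"
    using \<open>coeff (coeff (F * h) (j0 + i0)) e0 \<noteq> 0\<close> by auto
  ultimately show "weight_max_unique d n (F * h) (j0 + i0)"
    using deg by (simp add: weight_max_unique_def weight_def W)
qed

lemma weight_ge_if_coeff_coeff_nonzero:
  "coeff (coeff G m) e \<noteq> 0 \<Longrightarrow> d * e + n * m \<le> weight d n G m"
  by (simp add: weight_def le_degree)

text \<open>Reducing \<open>y\<^sup>k\<close> to \<open>f(x) y\<^sup>k\<^sup>-\<^sup>d\<close> preserves the weight of the top monomial, whose coefficient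
  gets multiplied by the leading coefficient of \<open>f\<close>; all other monomials stay strictly below it.\<close>

lemma coeff_reduced_product_top_low:
  fixes P :: "'a::field poly poly"
  assumes "0 < d" and top: "weight_max_unique d (degree f) P k" and "k < d"
  shows "coeff (coeff (poly_cutoff d P + [:f:] * poly_shift d P) k) (degree (coeff P k)) \<noteq> 0"
proof -
  define e0 where "e0 = degree (coeff P k)"
  have "coeff (f * coeff P (k + d)) e0 = 0"
  proof (cases "coeff P (k + d) = 0")
    case False
    then have "weight d (degree f) P (k + d) < weight d (degree f) P k"
      using top \<open>0 < d\<close> by (simp add: weight_max_unique_def)
    then have "d * (degree (coeff P (k + d)) + degree f) < d * e0"
      by (simp add: weight_def e0_def algebra_simps)
    then have "degree (f * coeff P (k + d)) < e0"
      using degree_mult_le[of f "coeff P (k + d)"] by simp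
    then show ?thesis
      by (simp add: coeff_eq_0)
  qed simp
  moreover have "coeff (coeff P k) e0 \<noteq> 0"
    using top by (simp add: weight_max_unique_def e0_def)
  ultimately show ?thesis
    using \<open>k < d\<close> by (simp add: coeff_poly_cutoff coeff_poly_shift e0_def)
qed

lemma coeff_reduced_product_top_high:
  fixes P :: "'a::field poly poly"
  assumes "0 < d" "f \<noteq> 0" and top: "weight_max_unique d (degree f) P (m + d)" and "m < d"
  shows "coeff (coeff (poly_cutoff d P + [:f:] * poly_shift d P) m) (degree f + degree (coeff P (m + d))) \<noteq> 0"
proof -
  define e0 where "e0 = degree (coeff P (m + d))"
  have "coeff (coeff P m) (degree f + e0) = 0"
  proof (cases "coeff P m = 0")
    case False
    then have "weight d (degree f) P m < weight d (degree f) P (m + d)"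
      using top \<open>0 < d\<close> by (simp add: weight_max_unique_def)
    then have "d * degree (coeff P m) + degree f * m < d * e0 + degree f * (m + d)"
      by (simp add: weight_def e0_def)
    then have "d * degree (coeff P m) < d * (degree f + e0)"
      by (simp add: algebra_simps)
    then show ?thesis
      by (simp add: coeff_eq_0)
  qed simp
  moreover have "coeff (f * coeff P (m + d)) (degree f + e0) \<noteq> 0"
    using top \<open>f \<noteq> 0\<close> by (simp add: weight_max_unique_def e0_def coeff_mult_degree_sum)
  ultimately show ?thesis
    using \<open>m < d\<close> by (simp add: coeff_poly_cutoff coeff_poly_shift e0_def)
qed

lemma weight_le_reduced_product:
  fixes P :: "'a::field poly poly"
  assumes "0 < d" "f \<noteq> 0" and top: "weight_max_unique d (degree f) P k" and "k < 2 * d"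
  defines "g \<equiv> poly_cutoff d P + [:f:] * poly_shift d P"
  obtains m where "coeff g m \<noteq> 0" "weight d (degree f) P k \<le> weight d (degree f) g m"
proof (cases "k < d")
  case True
  have "coeff (coeff g k) (degree (coeff P k)) \<noteq> 0"
    unfolding g_def by (rule coeff_reduced_product_top_low[OF assms(1) top True])
  then show thesis
    using weight_ge_if_coeff_coeff_nonzero[of g k _ d "degree f"]
    by (intro that[of k]) (auto simp: weight_def)
next
  case False
  define m where "m = k - d"
  have k: "k = m + d" "m < d"
    using False \<open>k < 2 * d\<close> by (simp_all add: m_def)
  have "coeff (coeff g m) (degree f + degree (coeff P k)) \<noteq> 0"
    unfolding g_def k(1) by (rule coeff_reduced_product_top_high[OF assms(1,2) top[unfolded k(1)] k(2)])
  moreover have "weight d (degree f) P k = d * (degree f + degree (coeff P k)) + degree f * m"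
    by (simp add: weight_def k(1) algebra_simps)
  ultimately show thesis
    using weight_ge_if_coeff_coeff_nonzero[of g m _ d "degree f"] by (intro that[of m]) auto
qed

section \<open>Local expansions at affine points\<close>

locale superelliptic_curve =
  fixes f :: "'a::alg_closed_field poly" and d :: nat
  assumes d_gt_1: "1 < d"
    and char_not_dvd: "of_nat d \<noteq> (0::'a)"
    and rsquarefree_f: "rsquarefree f"
    and degree_f_pos: "0 < degree f"
begin

lemma d_pos: "0 < d"
  using d_gt_1 by simp

lemma f_nonzero: "f \<noteq> 0"
  using degree_f_pos by auto

lemma affine_pt_iff_root: "affine_pt f d (a, 0) \<longleftrightarrow> poly f a = 0"
  using d_pos by (auto simp: affine_pt_def power_0_left)

text \<open>Local parametrisations: at a point \<open>(a, b)\<close> with \<open>b \<noteq> 0\<close> the function \<open>x - a\<close> is a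
  uniformizer and \<open>y\<close> is the \<open>d\<close>-th root of \<open>f(x)\<close> through \<open>b\<close>; at a ramification point
  \<open>(a, 0)\<close> the function \<open>y\<close> is a uniformizer and \<open>x - a\<close> is obtained by inverting \<open>f(a + t) = t\<^sup>d\<close>.\<close>

definition ram_x :: "'a \<Rightarrow> 'a fps" where
  "ram_x a = fps_inv (poly_fps (fps_const a + fps_X) f) oo fps_X ^ d"

definition branch_x :: "'a \<times> 'a \<Rightarrow> 'a fps" where
  "branch_x P = fps_const (fst P) + (if snd P = 0 then ram_x (fst P) else fps_X)"

definition branch_y :: "'a \<times> 'a \<Rightarrow> 'a fps" where
  "branch_y P =
     (if snd P = 0 then fps_X else fps_root d (snd P) (poly_fps (fps_const (fst P) + fps_X) f))"

lemma ram_x_nth_0 [simp]: "ram_x a $ 0 = 0"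
  by (simp add: ram_x_def)

lemma
  assumes "poly f a = 0"
  shows poly_fps_ram_x: "poly_fps (fps_const a + ram_x a) f = fps_X ^ d"
    and subdegree_ram_x: "subdegree (ram_x a) = d"
    and ram_x_nonzero: "ram_x a \<noteq> 0"
proof -
  define E where "E = poly_fps (fps_const a + fps_X) f"
  obtain u where u: "f = [:-a, 1:] * u" "poly u a \<noteq> 0"
    using rsquarefree_root_factor[OF rsquarefree_f assms] .
  have "E = poly_fps (fps_const a + fps_X) [:-a, 1:] * poly_fps (fps_const a + fps_X) u"
    unfolding E_def by (subst u(1)) (rule poly_fps.hom_mult)
  also have "poly_fps (fps_const a + fps_X) [:-a, 1:] = fps_X"
    by (simp add: poly_fps_pCons)
  finally have "E = fps_X * poly_fps (fps_const a + fps_X) u" .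
  then have E0: "E $ 0 = 0" and E1: "E $ 1 \<noteq> 0"
    using u(2) by (simp_all add: poly_fps_nth_0)
  have "poly_fps (fps_const a + ram_x a) f = E oo ram_x a"
    by (simp add: E_def poly_fps_compose fps_compose_add_distrib)
  then show "poly_fps (fps_const a + ram_x a) f = fps_X ^ d"
    using fps_inv_compose_X_power(1)[OF E0 E1 d_pos] by (simp add: ram_x_def E_def)
  show "subdegree (ram_x a) = d" "ram_x a \<noteq> 0"
    using fps_inv_compose_X_power(2,3)[OF E0 E1 d_pos] by (simp_all add: ram_x_def E_def)
qed

lemma
  assumes "affine_pt f d P"
  shows branch_on_curve: "branch_y P ^ d = poly_fps (branch_x P) f"
    and branch_x_nth_0: "branch_x P $ 0 = fst P"
    and branch_y_nth_0: "branch_y P $ 0 = snd P"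
proof -
  obtain a b where P: "P = (a, b)"
    by fastforce
  have ab: "b ^ d = poly f a"
    using assms by (simp add: affine_pt_def P)
  show "branch_y P ^ d = poly_fps (branch_x P) f"
  proof (cases "b = 0")
    case True
    then have "poly f a = 0"
      using ab d_pos by (simp add: power_0_left)
    then show ?thesis
      using True poly_fps_ram_x[of a] by (simp add: P branch_x_def branch_y_def)
  next
    case False
    then show ?thesis
      using fps_root_power[OF False char_not_dvd] ab
      by (simp add: P branch_x_def branch_y_def poly_fps_nth_0)
  qed
  show "branch_x P $ 0 = fst P" "branch_y P $ 0 = snd P"
    by (simp_all add: P branch_x_def branch_y_def)
qed

definition expansion :: "'a \<times> 'a \<Rightarrow> 'a poly poly \<Rightarrow> 'a fps" where
  "expansion P = eval2_fps (branch_x P) (branch_y P)"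

sublocale expansion: comm_ring_hom "expansion P" for P
  unfolding expansion_def by (rule eval2_fps.comm_ring_hom_axioms)

declare expansion.hom_simps [simp]

lemma expansion_nth_0: "affine_pt f d P \<Longrightarrow> expansion P G $ 0 = eval2 G (fst P) (snd P)"
  by (simp add: expansion_def eval2_fps_nth_0 branch_x_nth_0 branch_y_nth_0)

lemma expansion_eq_0_if_curve_eq_dvd:
  "affine_pt f d P \<Longrightarrow> curve_eq f d dvd G \<Longrightarrow> expansion P G = 0"
  unfolding expansion_def by (rule eval2_fps_eq_0_if_curve_eq_dvd[OF branch_on_curve])

lemma expansion_cong:
  "affine_pt f d P \<Longrightarrow> curve_eq f d dvd G - H \<Longrightarrow> expansion P G = expansion P H"
  using expansion_eq_0_if_curve_eq_dvd[of P "G - H"] by simp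

lemma expansion_x_minus:
  "expansion (a, b) [:[:-a, 1:]:] = (if b = 0 then ram_x a else fps_X)"
  by (simp add: expansion_def branch_x_def poly_fps_pCons)

lemma expansion_x_poly_unram:
  "b \<noteq> 0 \<Longrightarrow> expansion (a, b) [:p:] = fps_of_poly (pcompose p [:a, 1:])"
  by (simp add: expansion_def branch_x_def poly_fps_shift)

definition uniformizer :: "'a \<times> 'a \<Rightarrow> 'a poly poly" where
  "uniformizer P = (if snd P = 0 then [:0, 1:] else [:[:- fst P, 1:]:])"

lemma expansion_uniformizer: "expansion P (uniformizer P) = fps_X"
  using expansion_x_minus[of "fst P" "snd P"]
  by (simp add: uniformizer_def expansion_def branch_y_def)

lemma uniformizer_factor_ram:
  assumes "poly f a = 0" "eval2 G a 0 = 0"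
  obtains v G' where "eval2 v a 0 \<noteq> 0" "curve_eq f d dvd G * v - [:0, 1:] * G'"
proof -
  obtain S S' where G: "G = [:0, 1:] * S + [:[:-a, 1:]:] * [:S':]"
    using eval2_eq_0_decompose[OF assms(2)] by auto
  obtain u where u: "f = [:-a, 1:] * u" "poly u a \<noteq> 0"
    using rsquarefree_root_factor[OF rsquarefree_f assms(1)] .
  have y_power: "[:0, 1:] * [:0, 1:] ^ (d - 1) = (monom 1 d :: 'a poly poly)"
    using d_pos by (simp add: monom_altdef flip: power_Suc)
  define G' where "G' = S * [:u:] + [:0, 1:] ^ (d - 1) * [:S':]"
  have "G * [:u:] - [:0, 1:] * G' = [:f:] * [:S':] - monom 1 d * [:S':]"
    unfolding G G'_def u(1) y_power[symmetric] by (simp add: algebra_simps)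
  also have "\<dots> = - (curve_eq f d * [:S':])"
    by (simp add: curve_eq_def algebra_simps)
  finally have "curve_eq f d dvd G * [:u:] - [:0, 1:] * G'"
    by (metis dvd_minus_iff dvd_triv_left)
  then show thesis
    using u(2) by (intro that[of "[:u:]" G']) simp_all
qed

lemma uniformizer_factor_unram:
  assumes "b \<noteq> 0" "b ^ d = poly f a" "eval2 G a b = 0"
  obtains v G' where "eval2 v a b \<noteq> 0" "curve_eq f d dvd G * v - [:[:-a, 1:]:] * G'"
proof -
  obtain S S' where G: "G = [:[:-b:], 1:] * S + [:[:-a, 1:]:] * [:S':]"
    using eval2_eq_0_decompose[OF assms(3)] .
  define V where "V = (\<Sum>i<d. [:[:b:]:] ^ (d - Suc i) * [:0, 1:] ^ i)"
  define r where "r = synthetic_div f a"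
  have "f - [:poly f a:] = [:-a, 1:] * r"
    using synthetic_div_correct'[of a f] by (simp add: r_def algebra_simps)
  then have f_shift: "[:f:] - [:[:b ^ d:]:] = [:[:-a, 1:]:] * [:r:]"
    using assms(2) by simp
  have "[:[:-b:], 1:] * V = monom 1 d - [:[:b ^ d:]:]"
    using power_diff_sumr2[of "[:0, 1:]" d "[:[:b:]:]"]
    by (simp add: V_def monom_altdef poly_const_pow)
  also have "\<dots> = curve_eq f d + [:[:-a, 1:]:] * [:r:]"
    unfolding curve_eq_def f_shift[symmetric] by (simp only: add_diff_eq diff_add_cancel)
  finally have yV: "[:[:-b:], 1:] * V = curve_eq f d + [:[:-a, 1:]:] * [:r:]" .
  define G' where "G' = [:r:] * S + [:S':] * V"
  have "G * V - [:[:-a, 1:]:] * G' = S * ([:[:-b:], 1:] * V - [:[:-a, 1:]:] * [:r:])"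
    unfolding G G'_def by (simp only: algebra_simps)
  also have "\<dots> = curve_eq f d * S"
    by (simp only: yV add_diff_cancel_right') (rule mult.commute)
  finally have "curve_eq f d dvd G * V - [:[:-a, 1:]:] * G'"
    by simp
  moreover have "eval2 V a b = of_nat d * b ^ (d - 1)"
  proof -
    have "b ^ (d - Suc i) * b ^ i = b ^ (d - 1)" if "i < d" for i
      using that by (simp flip: power_add)
    then show ?thesis
      by (simp add: V_def eval2_pCons)
  qed
  ultimately show thesis
    using that[of V G'] assms(1) char_not_dvd by simp
qed

lemma uniformizer_factor:
  assumes "affine_pt f d P" "eval2 G (fst P) (snd P) = 0"
  obtains v G' where "eval2 v (fst P) (snd P) \<noteq> 0" "curve_eq f d dvd G * v - uniformizer P * G'"
proof -
  obtain a b where P: "P = (a, b)"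
    by fastforce
  have ab: "b ^ d = poly f a"
    using assms(1) by (simp add: affine_pt_def P)
  show thesis
  proof (cases "b = 0")
    case True
    have "poly f a = 0" "eval2 G a 0 = 0"
      using ab d_pos assms(2) True by (simp_all add: P power_0_left)
    then obtain v G' where "eval2 v a 0 \<noteq> 0" "curve_eq f d dvd G * v - [:0, 1:] * G'"
      by (rule uniformizer_factor_ram)
    then show thesis
      by (intro that[of v G']) (simp_all add: P True uniformizer_def)
  next
    case False
    obtain v G' where "eval2 v a b \<noteq> 0" "curve_eq f d dvd G * v - [:[:-a, 1:]:] * G'"
      using uniformizer_factor_unram[OF False ab] assms(2) by (auto simp: P)
    then show thesis
      by (intro that[of v G']) (simp_all add: P False uniformizer_def)
  qed
qed

lemma expansion_dvd_if_vanish_ge: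
  assumes P: "affine_pt f d P" and "vanish_ge f d P G k"
  shows "fps_X ^ k dvd expansion P G"
proof -
  define X where "X = [:[:- fst P, 1:]:]"
  define Y where "Y = [:[:- snd P:], 1:]"
  obtain v c where v: "eval2 v (fst P) (snd P) \<noteq> 0"
    and dvd: "curve_eq f d dvd G * v - (\<Sum>i\<le>k. c i * X ^ i * Y ^ (k - i))"
    using assms(2) unfolding vanish_ge_def X_def Y_def by blast
  have X: "fps_X dvd expansion P X" and Y: "fps_X dvd expansion P Y"
    using P by (simp_all add: fps_X_dvd_iff expansion_nth_0 X_def Y_def eval2_pCons)
  have "fps_X ^ k dvd expansion P (c i) * expansion P X ^ i * expansion P Y ^ (k - i)"
    if "i \<le> k" for i
  proof -
    have "fps_X ^ i * fps_X ^ (k - i) dvd expansion P X ^ i * expansion P Y ^ (k - i)"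
      using X Y by (intro mult_dvd_mono dvd_power_same)
    moreover have "fps_X ^ k = fps_X ^ i * fps_X ^ (k - i)"
      using that by (simp flip: power_add)
    ultimately show ?thesis
      by (metis dvd_mult mult.assoc)
  qed
  then have "fps_X ^ k dvd expansion P (\<Sum>i\<le>k. c i * X ^ i * Y ^ (k - i))"
    by (auto intro!: dvd_sum)
  then have "fps_X ^ k dvd expansion P G * expansion P v"
    using expansion_cong[OF P dvd] by simp
  moreover have "is_unit (expansion P v)"
    using v by (simp add: expansion_nth_0[OF P])
  ultimately show ?thesis
    by (simp add: dvd_mult_unit_iff)
qed

lemma exists_uniformizer_power_factor:
  assumes P: "affine_pt f d P"
  shows "fps_X ^ k dvd expansion P G \<Longrightarrow>
    \<exists>v c. eval2 v (fst P) (snd P) \<noteq> 0 \<and> curve_eq f d dvd G * v - c * uniformizer P ^ k"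
proof (induction k arbitrary: G)
  case 0
  have "eval2 1 (fst P) (snd P) \<noteq> 0" "curve_eq f d dvd G * 1 - G * uniformizer P ^ 0"
    by simp_all
  then show ?case
    by blast
next
  case (Suc k)
  have "expansion P G $ 0 = 0"
    using Suc.prems unfolding fps_X_power_dvd_iff by simp
  then have "eval2 G (fst P) (snd P) = 0"
    by (simp add: expansion_nth_0[OF P])
  then obtain v G' where v: "eval2 v (fst P) (snd P) \<noteq> 0"
    and dvd: "curve_eq f d dvd G * v - uniformizer P * G'"
    using uniformizer_factor[OF P] by blast
  have "expansion P G * expansion P v = fps_X * expansion P G'"
    using expansion_cong[OF P dvd] by (simp add: expansion_uniformizer)
  then have "fps_X * fps_X ^ k dvd fps_X * expansion P G'"
    using Suc.prems by (metis dvd_mult2 power_Suc)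
  then have "fps_X ^ k dvd expansion P G'"
    by simp
  then obtain v' c where v': "eval2 v' (fst P) (snd P) \<noteq> 0"
    and dvd': "curve_eq f d dvd G' * v' - c * uniformizer P ^ k"
    using Suc.IH by blast
  have "G * (v * v') - c * uniformizer P ^ Suc k
      = (G * v - uniformizer P * G') * v' + uniformizer P * (G' * v' - c * uniformizer P ^ k)"
    by (simp add: algebra_simps)
  then have "curve_eq f d dvd G * (v * v') - c * uniformizer P ^ Suc k"
    using dvd dvd' by (simp add: dvd_add dvd_mult dvd_mult2)
  moreover have "eval2 (v * v') (fst P) (snd P) \<noteq> 0"
    using v v' by simp
  ultimately show ?case
    by blast
qed

lemma vanish_ge_if_expansion_dvd:
  assumes P: "affine_pt f d P" and "fps_X ^ k dvd expansion P G"
  shows "vanish_ge f d P G k"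
proof -
  define X where "X = [:[:- fst P, 1:]:]"
  define Y where "Y = [:[:- snd P:], 1:]"
  obtain v c where v: "eval2 v (fst P) (snd P) \<noteq> 0"
    and dvd: "curve_eq f d dvd G * v - c * uniformizer P ^ k"
    using exists_uniformizer_power_factor[OF assms] by blast
  define j where "j = (if snd P = 0 then 0 else k)"
  have "c * uniformizer P ^ k = c * X ^ j * Y ^ (k - j)"
    by (simp add: uniformizer_def j_def X_def Y_def)
  also have "\<dots> = (\<Sum>i\<le>k. if i = j then c * X ^ i * Y ^ (k - i) else 0)"
    by (simp add: sum.delta j_def)
  also have "\<dots> = (\<Sum>i\<le>k. (if i = j then c else 0) * X ^ i * Y ^ (k - i))"
    by (intro sum.cong refl) (simp only: mult_delta_left)
  finally have "curve_eq f d dvd G * v - (\<Sum>i\<le>k. (if i = j then c else 0) * X ^ i * Y ^ (k - i))"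
    using dvd by simp
  with v show ?thesis
    unfolding vanish_ge_def X_def Y_def
    by (intro exI[of _ v] exI[of _ "\<lambda>i. if i = j then c else 0"] conjI)
qed

lemma vanish_ge_iff:
  "affine_pt f d P \<Longrightarrow> vanish_ge f d P G k \<longleftrightarrow> fps_X ^ k dvd expansion P G"
  using expansion_dvd_if_vanish_ge vanish_ge_if_expansion_dvd by blast

lemma ord_aff_eq_subdegree:
  assumes "affine_pt f d P" "expansion P G \<noteq> 0"
  shows "ord_aff f d P G = subdegree (expansion P G)"
  unfolding ord_aff_def
  by (rule Greatest_equality)
     (use assms in \<open>simp_all add: vanish_ge_iff fps_dvd_iff fps_X_power_subdegree\<close>)

section \<open>Injectivity of the local expansions\<close>

lemma expansion_ram_smult_x_minus:
  "expansion (a, 0) (smult [:-a, 1:] Q) = ram_x a * expansion (a, 0) Q"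
  using expansion.hom_mult[of "(a, 0)" "[:[:-a, 1:]:]" Q] by (simp add: expansion_x_minus)

lemma expansion_ram_decompose:
  "expansion (a, 0) G = ram_x a * expansion (a, 0) (map_poly (\<lambda>c. synthetic_div c a) G)
     + fps_of_poly (map_poly (\<lambda>c. poly c a) G)"
proof -
  have "expansion (a, 0) (map_poly (\<lambda>c. [:poly c a:]) G)
      = poly_fps fps_X (map_poly (\<lambda>c. poly c a) G)"
    by (simp add: expansion_def eval2_fps_def branch_y_def map_poly_map_poly o_def)
       (simp add: poly_fps_def map_poly_map_poly o_def)
  then show ?thesis
    by (subst decompose_x_minus[of G a]) (simp add: poly_fps_fps_X expansion_ram_smult_x_minus)
qed

lemma vanishes_if_ram_expansion_dvd:
  assumes "poly f a = 0" "degree G < d" "fps_X ^ d dvd expansion (a, 0) G"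
  shows "map_poly (\<lambda>c. poly c a) G = 0"
proof (rule fps_of_poly_eq_0_if_fps_X_power_dvd)
  show "degree (map_poly (\<lambda>c. poly c a) G) < d"
    using assms(2) map_poly_degree_leq[of "\<lambda>c. poly c a" G] by linarith
  have "fps_X ^ d dvd ram_x a"
    using subdegree_ram_x[OF assms(1)] ram_x_nonzero[OF assms(1)]
    by (simp add: fps_dvd_iff fps_X_power_subdegree)
  then show "fps_X ^ d dvd fps_of_poly (map_poly (\<lambda>c. poly c a) G)"
    using assms(3) unfolding expansion_ram_decompose[of a G] by (metis dvd_add_right_iff dvd_mult2)
qed

text \<open>At a ramification point, a reduced function vanishing identically along \<open>x = a\<close> is divisible
  by \<open>x - a\<close>, whose expansion is \<open>ram_x a \<noteq> 0\<close>; induct on the degree of the leading coefficient.\<close>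

lemma expansion_ram_nonzero:
  assumes "poly f a = 0"
  shows "G \<noteq> 0 \<Longrightarrow> degree G < d \<Longrightarrow> expansion (a, 0) G \<noteq> 0"
proof (induction "degree (lead_coeff G)" arbitrary: G rule: less_induct)
  case less
  show ?case
  proof
    assume zero: "expansion (a, 0) G = 0"
    define Q where "Q = map_poly (\<lambda>c. synthetic_div c a) G"
    have "map_poly (\<lambda>c. poly c a) G = 0"
      using vanishes_if_ram_expansion_dvd[OF assms less.prems(2)] zero by simp
    then have GQ: "G = smult [:-a, 1:] Q"
      unfolding Q_def by (rule eq_smult_x_minus_if_vanishes)
    then have "Q \<noteq> 0" "degree Q < d"
      using less.prems by auto
    moreover have "expansion (a, 0) Q = 0"
      using zero ram_x_nonzero[OF assms] by (simp add: GQ expansion_ram_smult_x_minus)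
    moreover have "degree (lead_coeff Q) < degree (lead_coeff G)"
    proof -
      have "degree ([:-a, 1:] * lead_coeff Q) = 1 + degree (lead_coeff Q)"
        using \<open>Q \<noteq> 0\<close> by (subst degree_mult_eq) auto
      then show ?thesis
        by (simp only: GQ lead_coeff_smult)
    qed
    ultimately show False
      using less.hyps by blast
  qed
qed

lemma exists_root: "\<exists>a. poly f a = 0"
  using alg_closed_imp_poly_has_root degree_f_pos by blast

lemma curve_eq_no_reduced_factor:
  assumes "G * q = smult c (curve_eq f d)" "c \<noteq> 0" "0 < degree G" "degree G < d"
  shows False
proof -
  obtain a0 where a0: "poly f a0 = 0"
    using exists_root by blast
  have "G \<noteq> 0" "q \<noteq> 0"
    using assms(1,2) curve_eq_nonzero[OF d_pos, of f] by auto
  have "degree (G * q) = d"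
    using assms(1,2) by (simp add: degree_curve_eq[OF d_pos])
  then have "degree q < d"
    using \<open>G \<noteq> 0\<close> \<open>q \<noteq> 0\<close> assms(3) by (simp add: degree_mult_eq)
  have "expansion (a0, 0) (G * q) = 0"
    unfolding assms(1) using a0
    by (intro expansion_eq_0_if_curve_eq_dvd) (simp_all add: affine_pt_iff_root dvd_smult)
  then show False
    using \<open>G \<noteq> 0\<close> \<open>q \<noteq> 0\<close> \<open>degree q < d\<close> assms(4) expansion_ram_nonzero[OF a0] by auto
qed

text \<open>Pseudo-dividing \<open>y\<^sup>d - f\<close> by \<open>G\<close> leaves a nonzero remainder of smaller degree.\<close>

lemma exists_x_poly_multiple:
  assumes "G \<noteq> 0" "degree G < d"
  shows "\<exists>H N. N \<noteq> 0 \<and> curve_eq f d dvd H * G - [:N:]"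
  using assms
proof (induction "degree G" arbitrary: G rule: less_induct)
  case less
  show ?case
  proof (cases "degree G = 0")
    case True
    then obtain N where "G = [:N:]"
      by (metis degree_eq_zeroE)
    then show ?thesis
      using less.prems(1) by (intro exI[of _ 1] exI[of _ N]) simp
  next
    case False
    obtain q r where qr: "pseudo_divmod (curve_eq f d) G = (q, r)"
      by fastforce
    define c where "c = lead_coeff G ^ (Suc (degree (curve_eq f d)) - degree G)"
    have div: "smult c (curve_eq f d) = G * q + r"
      unfolding c_def by (rule pseudo_divmod(1)[OF less.prems(1) qr])
    have "r \<noteq> 0"
      using div curve_eq_no_reduced_factor[of G q c] False less.prems by (auto simp: c_def)
    then have "degree r < degree G"
      using pseudo_divmod(2)[OF less.prems(1) qr] by simp
    then obtain H N where "N \<noteq> 0" and dvd: "curve_eq f d dvd H * r - [:N:]"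
      using less.hyps[of r] \<open>r \<noteq> 0\<close> less.prems(2) by auto
    have eq: "(- H * q) * G - [:N:] = (H * r - [:N:]) - H * smult c (curve_eq f d)"
      by (simp add: div algebra_simps)
    have "curve_eq f d dvd (H * r - [:N:]) - H * smult c (curve_eq f d)"
      by (rule dvd_diff[OF dvd]) (simp add: dvd_smult)
    then have "curve_eq f d dvd (- H * q) * G - [:N:]"
      by (simp only: eq)
    then show ?thesis
      using \<open>N \<noteq> 0\<close> by blast
  qed
qed

lemma expansion_nonzero:
  assumes P: "affine_pt f d P" and "G \<noteq> 0" "degree G < d"
  shows "expansion P G \<noteq> 0"
proof -
  obtain a b where Pab: "P = (a, b)"
    by fastforce
  show ?thesis
  proof (cases "b = 0")
    case True
    then show ?thesis
      using P expansion_ram_nonzero assms(2,3) by (simp add: Pab affine_pt_iff_root)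
  next
    case False
    obtain H N where "N \<noteq> 0" and dvd: "curve_eq f d dvd H * G - [:N:]"
      using exists_x_poly_multiple[OF assms(2,3)] by blast
    then have "expansion P [:N:] \<noteq> 0"
      using False by (simp add: Pab expansion_x_poly_unram fps_of_poly_eq_iff pcompose_eq_0_iff)
    then show ?thesis
      using expansion_cong[OF P dvd] by auto
  qed
qed

lemma curve_eq_dvd_cancel_x_poly:
  assumes "N \<noteq> 0" "curve_eq f d dvd [:N:] * G"
  shows "curve_eq f d dvd G"
proof -
  obtain a0 where a0: "poly f a0 = 0"
    using exists_root by blast
  then have P: "affine_pt f d (a0, 0)"
    by (simp add: affine_pt_iff_root)
  have "expansion (a0, 0) [:N:] \<noteq> 0"
    using expansion_nonzero[OF P] assms(1) d_pos by simp
  moreover have "expansion (a0, 0) [:N:] * expansion (a0, 0) G = 0"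
    using expansion_eq_0_if_curve_eq_dvd[OF P assms(2)] by (simp only: expansion.hom_mult)
  ultimately have "expansion (a0, 0) G = 0"
    by simp
  then have "expansion (a0, 0) (curve_reduce f d G) = 0"
    using expansion_cong[OF P curve_eq_dvd_diff_reduce[OF d_pos]] by simp
  then have "curve_reduce f d G = 0"
    using expansion_nonzero[OF P _ degree_curve_reduce[OF d_pos]] by blast
  then show ?thesis
    using curve_eq_dvd_diff_reduce[OF d_pos, of f G] by simp
qed

section \<open>From local to global divisibility\<close>

text \<open>Over a point \<open>\<alpha>\<close> of the \<open>x\<close>-line lie either \<open>d\<close> unramified points, at each of which \<open>G\<close> then
  vanishes, or a single ramification point, where the hypothesis says \<open>t\<^sup>d\<close> divides the expansion.
  Either way \<open>G(\<alpha>, y)\<close>, of degree less than \<open>d\<close> in \<open>y\<close>, vanishes identically.\<close>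

lemma vanishes_if_locally_dvd_x_minus:
  assumes deg: "degree G < d"
    and dvd: "\<And>b. affine_pt f d (\<alpha>, b) \<Longrightarrow> expansion (\<alpha>, b) [:[:-\<alpha>, 1:]:] dvd expansion (\<alpha>, b) G"
  shows "map_poly (\<lambda>c. poly c \<alpha>) G = 0"
proof (cases "poly f \<alpha> = 0")
  case True
  have "fps_X ^ d dvd ram_x \<alpha>"
    using subdegree_ram_x[OF True] ram_x_nonzero[OF True]
    by (simp add: fps_dvd_iff fps_X_power_subdegree)
  also have "ram_x \<alpha> dvd expansion (\<alpha>, 0) G"
    using dvd[of 0] True by (simp add: affine_pt_iff_root expansion_x_minus)
  finally show ?thesis
    by (rule vanishes_if_ram_expansion_dvd[OF True deg])
next
  case False
  show ?thesis
  proof (rule vanishes_at_if_eval2_roots)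
    show "degree G < card {\<beta>. \<beta> ^ d = poly f \<alpha>}"
      using card_roots_x_power_eq_const[OF False char_not_dvd] deg by simp
    fix \<beta>
    assume "\<beta> \<in> {\<beta>. \<beta> ^ d = poly f \<alpha>}"
    then have P: "affine_pt f d (\<alpha>, \<beta>)" and "\<beta> \<noteq> 0"
      using False d_pos by (auto simp: affine_pt_def power_0_left)
    then have "fps_X dvd expansion (\<alpha>, \<beta>) G"
      using dvd[OF P] by (simp add: expansion_x_minus)
    then show "eval2 G \<alpha> \<beta> = 0"
      using expansion_nth_0[OF P, of G] by (simp add: fps_X_dvd_iff)
  qed
qed

lemma locally_dvd_cancel_x_minus:
  assumes "degree G < d"
    and dvd: "\<And>P. affine_pt f d P \<Longrightarrow> expansion P [:[:-\<alpha>, 1:] * N:] dvd expansion P G"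
  obtains Q where "G = [:[:-\<alpha>, 1:]:] * Q" "degree Q < d"
    "\<And>P. affine_pt f d P \<Longrightarrow> expansion P [:N:] dvd expansion P Q"
proof -
  have split: "[:[:-\<alpha>, 1:] * N:] = [:[:-\<alpha>, 1:]:] * [:N:]"
    by simp
  have "map_poly (\<lambda>c. poly c \<alpha>) G = 0"
    using assms(1)
  proof (rule vanishes_if_locally_dvd_x_minus)
    fix b assume "affine_pt f d (\<alpha>, b)"
    then show "expansion (\<alpha>, b) [:[:-\<alpha>, 1:]:] dvd expansion (\<alpha>, b) G"
      using dvd unfolding split expansion.hom_mult by (blast intro: dvd_mult_left)
  qed
  then have G: "G = [:[:-\<alpha>, 1:]:] * Q" if "Q = map_poly (\<lambda>c. synthetic_div c \<alpha>) G" for Q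
    using that eq_smult_x_minus_if_vanishes by fastforce
  define Q where "Q = map_poly (\<lambda>c. synthetic_div c \<alpha>) G"
  have "degree Q < d"
    using assms(1) G[OF Q_def] by (simp add: degree_mult_eq_0 degree_mult_eq)
  moreover have "expansion P [:N:] dvd expansion P Q" if P: "affine_pt f d P" for P
  proof -
    have "expansion P [:[:-\<alpha>, 1:]:] \<noteq> 0"
      using expansion_nonzero[OF P] d_pos by simp
    moreover have "expansion P [:[:-\<alpha>, 1:]:] * expansion P [:N:] dvd
        expansion P [:[:-\<alpha>, 1:]:] * expansion P Q"
      using dvd[OF P] by (simp only: split G[OF Q_def] expansion.hom_mult)
    ultimately show ?thesis
      by simp
  qed
  ultimately show thesis
    using that G[OF Q_def] by blast
qed

text \<open>Peel off the linear factors of \<open>N\<close> one at a time.\<close>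

lemma x_poly_dvd_if_locally_dvd:
  "N \<noteq> 0 \<Longrightarrow> degree G < d \<Longrightarrow> (\<And>P. affine_pt f d P \<Longrightarrow> expansion P [:N:] dvd expansion P G)
    \<Longrightarrow> \<exists>F. curve_eq f d dvd G - [:N:] * F"
proof (induction "degree N" arbitrary: N G rule: less_induct)
  case less
  show ?case
  proof (cases "degree N = 0")
    case True
    then obtain c where "N = [:c:]" "c \<noteq> 0"
      using less.prems(1) by (metis degree_eq_zeroE pCons_eq_0_iff)
    then have "G - [:N:] * smult [:inverse c:] G = 0"
      by (simp add: smult_smult flip: one_pCons)
    then show ?thesis
      by (metis dvd_0_right)
  next
    case False
    then obtain \<alpha> where "poly N \<alpha> = 0"
      using alg_closed_imp_poly_has_root by blast
    then obtain N1 where N: "N = [:-\<alpha>, 1:] * N1"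
      by (auto simp: poly_eq_0_iff_dvd elim: dvdE)
    then have "N1 \<noteq> 0"
      using less.prems(1) by auto
    obtain Q where G: "G = [:[:-\<alpha>, 1:]:] * Q" and "degree Q < d"
      and "\<And>P. affine_pt f d P \<Longrightarrow> expansion P [:N1:] dvd expansion P Q"
      using locally_dvd_cancel_x_minus less.prems(2,3) unfolding N by blast
    moreover have "degree N1 < degree N"
      using degree_linear_mult[OF \<open>N1 \<noteq> 0\<close>] by (simp only: N)
    ultimately obtain F where "curve_eq f d dvd Q - [:N1:] * F"
      using less.hyps \<open>N1 \<noteq> 0\<close> by blast
    then have "curve_eq f d dvd [:[:-\<alpha>, 1:]:] * (Q - [:N1:] * F)"
      by (rule dvd_mult)
    moreover have "[:N:] = [:[:-\<alpha>, 1:]:] * [:N1:]"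
      by (simp add: N)
    then have "[:[:-\<alpha>, 1:]:] * (Q - [:N1:] * F) = G - [:N:] * F"
      by (simp only: G right_diff_distrib mult.assoc)
    ultimately show ?thesis
      by auto
  qed
qed

section \<open>Pole order at infinity\<close>

lemma pole_O_eq_Max_weight:
  "pole_O f d G = Max (weight d (degree f) G ` {j. coeff G j \<noteq> 0})"
  unfolding pole_O_def weight_def by (rule arg_cong[where f = Max]) auto

lemma finite_weights: "finite (weight d (degree f) G ` {j. coeff G j \<noteq> 0})"
  by (rule finite_imageI, rule finite_subset[of _ "{..degree G}"]) (auto intro: le_degree)

lemma weight_le_pole_O: "coeff G j \<noteq> 0 \<Longrightarrow> weight d (degree f) G j \<le> pole_O f d G"
  unfolding pole_O_eq_Max_weight by (intro Max_ge finite_weights) auto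

lemma pole_O_weight_max_unique:
  assumes "coprime (degree f) d" "G \<noteq> 0" "degree G < d"
  obtains j0 where "weight_max_unique d (degree f) G j0" "pole_O f d G = weight d (degree f) G j0"
proof -
  have "weight d (degree f) G ` {j. coeff G j \<noteq> 0} \<noteq> {}"
    using assms(2) by (auto simp: poly_eq_iff)
  then obtain j0 where j0: "coeff G j0 \<noteq> 0" "pole_O f d G = weight d (degree f) G j0"
    using Max_in[OF finite_weights] unfolding pole_O_eq_Max_weight by fastforce
  have less_d: "j < d" if "coeff G j \<noteq> 0" for j
    using le_degree[OF that] assms(3) by linarith
  have "weight d (degree f) G j < weight d (degree f) G j0" if "coeff G j \<noteq> 0" "j \<noteq> j0" for j
  proof -
    have "weight d (degree f) G j \<noteq> weight d (degree f) G j0"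
      using coprime_lincomb_inj[OF assms(1) less_d less_d] that j0(1) unfolding weight_def by blast
    then show ?thesis
      using weight_le_pole_O[OF that(1)] j0(2) by simp
  qed
  then show thesis
    using that j0 by (auto simp: weight_max_unique_def)
qed

lemma pole_O_mult_le:
  assumes "coprime (degree f) d" "F \<noteq> 0" "degree F < d" "h \<noteq> 0" "degree h < d" "degree g < d"
    and "curve_eq f d dvd g - F * h"
  shows "pole_O f d F + pole_O f d h \<le> pole_O f d g"
proof -
  obtain j0 where j0: "weight_max_unique d (degree f) F j0" "pole_O f d F = weight d (degree f) F j0"
    using pole_O_weight_max_unique assms(1-3) by blast
  obtain i0 where i0: "weight_max_unique d (degree f) h i0" "pole_O f d h = weight d (degree f) h i0"
    using pole_O_weight_max_unique assms(1,4,5) by blast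
  have "j0 < d" "i0 < d"
    using j0(1) i0(1) assms(3,5) le_degree by (fastforce simp: weight_max_unique_def)+
  have "degree (F * h) < 2 * d"
    using assms(3,5) degree_mult_le[of F h] by linarith
  then have g: "g = poly_cutoff d (F * h) + [:f:] * poly_shift d (F * h)"
    using eq_cutoff_shift_if_reduced assms(6,7) by blast
  obtain m where "coeff g m \<noteq> 0" "weight d (degree f) (F * h) (j0 + i0) \<le> weight d (degree f) g m"
    using weight_le_reduced_product[OF d_pos f_nonzero weight_max_unique_mult(1)[OF d_pos j0(1) i0(1)]]
      \<open>j0 < d\<close> \<open>i0 < d\<close> unfolding g[symmetric] by auto
  then show ?thesis
    using weight_le_pole_O weight_max_unique_mult(2)[OF d_pos j0(1) i0(1)] j0(2) i0(2)
    by (metis order.trans)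
qed

section \<open>Functions \<open>p(x) + c y\<close> vanishing to high order\<close>

lemma branch_y_unram_power:
  assumes "b \<noteq> 0" "b ^ d = poly f a"
  shows "branch_y (a, b) ^ d = fps_of_poly (pcompose f [:a, 1:])"
  using branch_on_curve[of "(a, b)"] assms
  by (simp add: affine_pt_def branch_x_def poly_fps_shift)

lemma expansion_linear_in_y:
  "b \<noteq> 0 \<Longrightarrow> expansion (a, b) [:p, [:c:]:] = fps_of_poly (pcompose p [:a, 1:]) + branch_y (a, b) * fps_const c"
  by (simp add: expansion_def eval2_fps_pCons branch_x_def poly_fps_shift)

text \<open>If \<open>p(x) + c y\<close> vanishes to order \<open>d l\<close> at an unramified point, then so does its norm
  \<open>c\<^sup>d f(x) - (-p(x))\<^sup>d\<close>; as the norm has degree at most \<open>d l\<close> it is a multiple of \<open>(x - a)\<^sup>d\<^sup>l\<close>.\<close>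

lemma norm_eq_monom_if_high_order:
  assumes "b \<noteq> 0" "b ^ d = poly f a" "fps_X ^ (d * l) dvd expansion (a, b) [:p, [:c:]:]"
    and "degree f \<le> d * l" "degree p \<le> l"
  shows "\<exists>\<mu>. smult (c ^ d) (pcompose f [:a, 1:]) = (- pcompose p [:a, 1:]) ^ d + monom \<mu> (d * l)"
proof -
  define T where "T = smult (c ^ d) (pcompose f [:a, 1:]) - (- pcompose p [:a, 1:]) ^ d"
  define Z where "Z = fps_const c * branch_y (a, b)"
  define W where "W = - fps_of_poly (pcompose p [:a, 1:])"
  have "fps_X ^ (d * l) dvd Z - W"
    using assms(3) expansion_linear_in_y[OF assms(1)] by (simp add: Z_def W_def algebra_simps)
  also have "Z - W dvd Z ^ d - W ^ d"
    using power_diff_sumr2[of Z d W] by (metis dvd_triv_left)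
  also have "Z ^ d - W ^ d = fps_of_poly T"
    using branch_y_unram_power[OF assms(1,2)]
    by (simp add: T_def Z_def W_def power_mult_distrib fps_of_poly_simps fps_const_power)
  finally have dvd: "fps_X ^ (d * l) dvd fps_of_poly T" .
  have "degree T \<le> d * l"
    unfolding T_def using assms(4,5)
    by (intro degree_diff_le) (simp_all add: degree_pcompose degree_power_eq_mult)
  then have "T = monom (coeff T (d * l)) (d * l)"
    using dvd by (intro poly_eqI) (auto simp: coeff_monom fps_X_power_dvd_iff coeff_eq_0 nat_neq_iff)
  then show ?thesis
    by (metis T_def add_diff_cancel_left' diff_add_cancel)
qed

lemma not_high_order_unramified:
  assumes "b \<noteq> 0" "b ^ d = poly f a" "[:p, [:c:]:] \<noteq> 0" "degree p \<le> l"
    and "degree f < (d - 1) * l" "\<not> d dvd degree f"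
  shows "\<not> fps_X ^ (d * l) dvd expansion (a, b) [:p, [:c:]:]"
proof
  assume dvd: "fps_X ^ (d * l) dvd expansion (a, b) [:p, [:c:]:]"
  have "0 < l" "degree f < d * l"
    using assms(5) by (auto intro: Nat.gr0I simp: diff_mult_distrib)
  show False
  proof (cases "c = 0")
    case True
    have "l < d * l"
      using mult_less_mono1[OF d_gt_1 \<open>0 < l\<close>] by simp
    moreover have "degree (pcompose p [:a, 1:]) = degree p"
      by (simp add: degree_pcompose)
    ultimately have "degree (pcompose p [:a, 1:]) < d * l"
      using assms(4) by linarith
    moreover have "fps_X ^ (d * l) dvd fps_of_poly (pcompose p [:a, 1:])"
      using dvd expansion_linear_in_y[OF assms(1), where p = p and c = c] True by simp
    ultimately have "pcompose p [:a, 1:] = 0"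
      by (rule fps_of_poly_eq_0_if_fps_X_power_dvd)
    then show False
      using assms(3) True by (simp add: pcompose_eq_0_iff)
  next
    case False
    define F where "F = smult (c ^ d) (pcompose f [:a, 1:])"
    obtain \<mu> where eq: "F = (- pcompose p [:a, 1:]) ^ d + monom \<mu> (d * l)"
      using norm_eq_monom_if_high_order[OF assms(1,2) dvd] \<open>degree f < d * l\<close> assms(4)
      unfolding F_def by fastforce
    have "F \<noteq> 0" "degree F = degree f" "degree (- pcompose p [:a, 1:]) \<le> l"
      using False f_nonzero assms(4) by (simp_all add: F_def pcompose_eq_0_iff degree_pcompose)
    then have "F \<noteq> (- pcompose p [:a, 1:]) ^ d + monom \<mu> (d * l)"
      using assms(5,6) by (intro not_eq_power_plus_monom[OF char_not_dvd]) simp_all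
    then show False
      using eq by contradiction
  qed
qed

section \<open>Principal divisors\<close>

lemma ord_aff_eq_subdegree_reduced:
  "affine_pt f d P \<Longrightarrow> G \<noteq> 0 \<Longrightarrow> degree G < d \<Longrightarrow> ord_aff f d P G = subdegree (expansion P G)"
  by (intro ord_aff_eq_subdegree expansion_nonzero)

lemma pole_O_const: "c \<noteq> 0 \<Longrightarrow> pole_O f d [:c:] = d * degree c"
proof -
  assume "c \<noteq> 0"
  then have "coeff [:c:] j \<noteq> 0 \<longleftrightarrow> j = 0" for j
    by (cases j) simp_all
  then have "{j. coeff [:c:] j \<noteq> 0} = {0}"
    by blast
  then show ?thesis
    by (simp add: pole_O_eq_Max_weight weight_def)
qed

lemma principal_mult_None: "principal_mult f d None k"
  unfolding principal_mult_def using d_pos by (intro exI[of _ 1]) simp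

text \<open>Witnessed by \<open>x - a\<close>, whose divisor is \<open>d (a, 0) - d O\<close>.\<close>

lemma principal_mult_ramification:
  assumes "poly f a = 0"
  shows "principal_mult f d (Some (a, 0)) d"
  unfolding principal_mult_def
proof (intro exI conjI allI impI)
  let ?g = "[:[:-a, 1:]:] :: 'a poly poly"
  show "?g \<noteq> 0" "(1 :: 'a poly poly) \<noteq> 0" "degree ?g < d" "degree (1 :: 'a poly poly) < d"
    using d_pos by simp_all
  show "- int (pole_O f d ?g) - - int (pole_O f d 1) = (if Some (a, 0) = None then 0 else - int d)"
    using pole_O_const[of "[:-a, 1:]"] pole_O_const[of 1] by (simp flip: one_pCons)
  fix P
  assume P: "affine_pt f d P"
  have "ord_aff f d P 1 = 0"
    using ord_aff_eq_subdegree_reduced[OF P] d_pos by simp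
  moreover have "ord_aff f d P ?g = (if P = (a, 0) then d else 0)"
  proof (cases "P = (a, 0)")
    case True
    then show ?thesis
      using ord_aff_eq_subdegree_reduced[OF P] d_pos subdegree_ram_x[OF assms]
      by (simp add: expansion_x_minus)
  next
    case False
    then have "fst P \<noteq> a"
      using P assms by (cases P) (auto simp: affine_pt_def)
    then have "expansion P ?g $ 0 \<noteq> 0"
      using expansion_nth_0[OF P] by simp
    then show ?thesis
      using False ord_aff_eq_subdegree_reduced[OF P] d_pos by simp
  qed
  ultimately show "int (ord_aff f d P ?g) - int (ord_aff f d P 1) = (if Some (a, 0) = Some P then int d else 0)"
    by auto
qed

lemma exists_reduced_cofactor:
  assumes "curve_eq f d dvd F * h - g" "g \<noteq> 0" "degree g < d"
  obtains Fr where "Fr \<noteq> 0" "degree Fr < d" "curve_eq f d dvd g - Fr * h"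
proof -
  define Fr where "Fr = curve_reduce f d F"
  have "curve_eq f d dvd F - Fr"
    unfolding Fr_def by (rule curve_eq_dvd_diff_reduce[OF d_pos])
  then have "curve_eq f d dvd (F - Fr) * h - (F * h - g)"
    using assms(1) by (rule dvd_diff[OF dvd_mult2])
  moreover have "(F - Fr) * h - (F * h - g) = g - Fr * h"
    by (simp add: algebra_simps)
  ultimately have dvd: "curve_eq f d dvd g - Fr * h"
    by simp
  have "Fr \<noteq> 0"
    using dvd reduced_eq_0_if_curve_eq_dvd assms(2,3) by fastforce
  moreover have "degree Fr < d"
    unfolding Fr_def by (rule degree_curve_reduce[OF d_pos])
  ultimately show thesis
    using that dvd by blast
qed

text \<open>A quotient \<open>g/h\<close> without poles at affine points is regular there: after multiplying by \<open>H\<close> with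
  \<open>H h \<equiv> N(x)\<close>, local divisibility by \<open>N\<close> becomes global.\<close>

lemma exists_regular_quotient:
  assumes "g \<noteq> 0" "degree g < d" "h \<noteq> 0" "degree h < d"
    and orders: "\<And>P. affine_pt f d P \<Longrightarrow> subdegree (expansion P h) \<le> subdegree (expansion P g)"
  obtains F where "F \<noteq> 0" "degree F < d" "curve_eq f d dvd g - F * h"
proof -
  obtain H N where "N \<noteq> 0" and norm: "curve_eq f d dvd H * h - [:N:]"
    using exists_x_poly_multiple[OF assms(3,4)] by blast
  define G0 where "G0 = curve_reduce f d (g * H)"
  have G0: "curve_eq f d dvd g * H - G0"
    unfolding G0_def by (rule curve_eq_dvd_diff_reduce[OF d_pos])
  have "expansion P [:N:] dvd expansion P G0" if P: "affine_pt f d P" for P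
  proof -
    have "expansion P h dvd expansion P g"
      using orders[OF P] expansion_nonzero[OF P] assms(1-4) by (simp add: fps_dvd_iff)
    moreover have "expansion P [:N:] = expansion P H * expansion P h"
      using expansion_cong[OF P norm] by simp
    moreover have "expansion P G0 = expansion P H * expansion P g"
      using expansion_cong[OF P G0] by (simp add: mult.commute)
    ultimately show ?thesis
      by (simp add: mult_dvd_mono)
  qed
  then obtain F where F: "curve_eq f d dvd G0 - [:N:] * F"
    using x_poly_dvd_if_locally_dvd[OF \<open>N \<noteq> 0\<close> degree_curve_reduce[OF d_pos]] G0_def by blast
  have "[:N:] * (F * h - g) = g * (H * h - [:N:]) - (g * H - G0) * h - (G0 - [:N:] * F) * h"
    by (simp add: algebra_simps)
  then have "curve_eq f d dvd [:N:] * (F * h - g)"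
    using G0 F norm by (simp add: dvd_add dvd_diff dvd_mult dvd_mult2)
  then have "curve_eq f d dvd F * h - g"
    by (rule curve_eq_dvd_cancel_x_poly[OF \<open>N \<noteq> 0\<close>])
  then show thesis
    using exists_reduced_cofactor assms(1,2) that by blast
qed

lemma principal_mult_imp_regular:
  assumes "coprime (degree f) d" "affine_pt f d P" "principal_mult f d (Some P) m"
  obtains F where "F \<noteq> 0" "degree F < d" "pole_O f d F \<le> m" "subdegree (expansion P F) = m"
proof -
  obtain g h where g: "g \<noteq> 0" "degree g < d" and h: "h \<noteq> 0" "degree h < d"
    and ord: "\<And>P'. affine_pt f d P' \<Longrightarrow>
      int (ord_aff f d P' g) - int (ord_aff f d P' h) = (if Some P = Some P' then int m else 0)"
    and pole: "pole_O f d g = pole_O f d h + m"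
    using assms(3) unfolding principal_mult_def by fastforce
  have sub: "subdegree (expansion P' g) = subdegree (expansion P' h) + (if P' = P then m else 0)"
    if "affine_pt f d P'" for P'
    using ord[OF that] ord_aff_eq_subdegree_reduced[OF that] g h by (auto split: if_splits)
  have "subdegree (expansion P' h) \<le> subdegree (expansion P' g)" if "affine_pt f d P'" for P'
    using sub[OF that] by simp
  then obtain F where F: "F \<noteq> 0" "degree F < d" and dvd: "curve_eq f d dvd g - F * h"
    by (rule exists_regular_quotient[OF g h])
  have "pole_O f d F + pole_O f d h \<le> pole_O f d g"
    by (rule pole_O_mult_le[OF assms(1) F h g(2) dvd])
  moreover have "subdegree (expansion P g) = subdegree (expansion P F) + subdegree (expansion P h)"
    using expansion_cong[OF assms(2) dvd] expansion_nonzero[OF assms(2)] F h by simp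
  ultimately show thesis
    using that F pole sub[OF assms(2)] by simp
qed

lemma small_pole_imp_linear_in_y:
  assumes "degree F < d" "pole_O f d F \<le> m" "m < degree f + d" "d < degree f"
  obtains p c where "F = [:p, [:c:]:]" "d * degree p \<le> m"
proof -
  have weight: "d * degree (coeff F j) + degree f * j \<le> m" if "coeff F j \<noteq> 0" for j
    using weight_le_pole_O[OF that] assms(2) by (simp add: weight_def)
  have "coeff F j = 0" if "2 \<le> j" for j
  proof (rule ccontr)
    assume "coeff F j \<noteq> 0"
    moreover have "degree f * 2 \<le> degree f * j"
      using that by simp
    ultimately show False
      using weight[of j] assms(3,4) by linarith
  qed
  moreover have "degree (coeff F 1) = 0"
  proof (cases "coeff F 1 = 0")
    case False
    then have "d * degree (coeff F 1) < d * 1"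
      using weight[of 1] assms(3) by linarith
    then show ?thesis
      by simp
  qed simp
  ultimately have "F = [:coeff F 0, [:coeff (coeff F 1) 0:]:]"
    by (intro poly_eqI) (auto simp: coeff_pCons numeral_2_eq_2 less_Suc_eq_le split: nat.split
        elim!: degree_eq_zeroE)
  moreover have "d * degree (coeff F 0) \<le> m"
    using weight[of 0] by (cases "coeff F 0 = 0") simp_all
  ultimately show thesis
    using that by blast
qed

lemma not_principal_mult_unramified:
  assumes "coprime (degree f) d" "affine_pt f d (a, b)" "b \<noteq> 0"
    and "degree f < (d - 1) * l" "d * l < degree f + d" "d < degree f"
  shows "\<not> principal_mult f d (Some (a, b)) (d * l)"
proof
  assume "principal_mult f d (Some (a, b)) (d * l)"
  then obtain F where F: "F \<noteq> 0" "degree F < d" "pole_O f d F \<le> d * l"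
    and order: "subdegree (expansion (a, b) F) = d * l"
    using principal_mult_imp_regular assms(1,2) by blast
  obtain p c where Fpc: "F = [:p, [:c:]:]" "d * degree p \<le> d * l"
    using small_pole_imp_linear_in_y[OF F(2,3) assms(5,6)] by blast
  have nd: "\<not> d dvd degree f"
    using assms(1) d_gt_1 by (metis coprime_common_divisor_nat coprime_commute dvd_refl nat_neq_iff)
  have "\<not> fps_X ^ (d * l) dvd expansion (a, b) F"
    unfolding Fpc(1) using assms(2-4) F(1) Fpc nd d_pos
    by (intro not_high_order_unramified) (simp_all add: affine_pt_def)
  then show False
    using order expansion_nonzero[OF assms(2) F(1,2)] by (simp add: fps_dvd_iff fps_X_power_subdegree)
qed

lemma not_point_order:
  assumes "coprime (degree f) d" "curve_point f d Q"
    and "degree f < (d - 1) * l" "d * l < degree f + d" "d < d * l" "d < degree f"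
  shows "\<not> point_order f d Q (d * l)"
proof
  assume order: "point_order f d Q (d * l)"
  then have minimal: "\<not> principal_mult f d Q k" if "0 < k" "k < d * l" for k
    using that by (simp add: point_order_def)
  show False
  proof (cases Q)
    case None
    then show False
      using minimal[of 1] principal_mult_None assms(5) d_gt_1 by simp
  next
    case (Some P)
    obtain a b where P: "P = (a, b)"
      by fastforce
    show False
    proof (cases "b = 0")
      case True
      then show False
        using assms(2,5) minimal[of d] principal_mult_ramification[of a] d_pos
        by (simp add: Some P curve_point_def affine_pt_iff_root)
    next
      case False
      then show False
        using order assms not_principal_mult_unramified[of a b l]
        by (simp add: Some P curve_point_def point_order_def)
    qed
  qed
qed

end

lemma floor_multiple_bounds:
  fixes n d :: nat
  assumes "1 < d" "d < n" "coprime n d"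
    and "int n - int (d * ((n + d) div d)) + int ((n + d) div d) < 0"
  defines "l \<equiv> (n + d) div d"
  shows "d * l < n + d" and "d < d * l" and "n < (d - 1) * l"
proof -
  have "\<not> d dvd n + d"
    using assms(1,3) by (metis coprime_common_divisor_nat dvd_add_left_iff dvd_refl nat_neq_iff)
  then show "d * l < n + d"
    using div_times_less_eq_dividend[of "n + d" d] unfolding l_def
    by (metis dvd_triv_left mult.commute nat_less_le)
  have "(d + d) div d \<le> l"
    unfolding l_def using assms(2) by (intro div_le_mono) simp
  then have "d * 2 \<le> d * l"
    using assms(1) by simp
  then show "d < d * l"
    using assms(1) by linarith
  have "int (n + l) < int (d * l)"
    using assms(4) unfolding l_def by linarith
  then have "n + l < d * l"
    by (simp only: of_nat_less_iff)
  then show "n < (d - 1) * l"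
    by (simp add: diff_mult_distrib)
qed

theorem mainTheorem2:
  fixes d n :: nat
  assumes "1 < d" and "d < n" and "coprime n d"
    and "\<not> CHAR('a::alg_closed_field) dvd d"
    and "int n - int (d * ((n + d) div d)) + int ((n + d) div d) < 0"
  shows "\<not> reachable TYPE('a) n d (d * ((n + d) div d))"
proof
  assume "reachable TYPE('a) n d (d * ((n + d) div d))"
  then obtain f :: "'a poly" and Q where f: "degree f = n" "rsquarefree f"
    and Q: "curve_point f d Q" "point_order f d Q (d * ((n + d) div d))"
    unfolding reachable_def by blast
  interpret superelliptic_curve f d
    using assms f by unfold_locales (simp_all add: of_nat_eq_0_iff_char_dvd)
  have "\<not> point_order f d Q (d * ((n + d) div d))"
    using floor_multiple_bounds[OF assms(1-3,5)] assms(2,3)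
    by (intro not_point_order Q(1)) (simp_all only: f(1) coprime_commute)
  then show False
    using Q(2) by contradiction
qed

end
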